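(* Let $N=N_{M,P,\tau}$ be a Nakamura manifold (complex dimension $n+1$) and let $1\le p\le n-1$. Then $N$ admits no $p$-Kähler structure.
   Context: Setup. Let $n\ge2$ and $M\in\mathrm{SL}(n,\mathbb Z)$ be diagonalizable over $\mathbb R$ with positive eigenvalues; let $P\in\mathrm{GL}(n,\mathbb R)$ and $\lambda_1,\dots,\lambda_n\in\mathbb R$ with $PMP^{-1}=\mathrm{diag}(e^{\lambda_1},\dots,e^{\lambda_n})$. Standing assumption: $\lambda_i\neq0$ for all $i$. Let $\rho(w)=\mathrm{diag}(e^{\frac12\lambda_1(w+\bar w)},\dots,e^{\frac12\lambda_n(w+\bar w)})$ and $G_M=\mathbb C\ltimes_\rho\mathbb C^n$ with coordinates $(w,z_1,\dots,z_n)$ and product $(w',z')*(w,z)=(w'+w,\,z'+\rho(w')z)$. For $\tau\in\mathbb R\setminus\{0\}$, $\Gamma'_\tau=\mathbb Z\oplus\sqrt{-1}\tau\mathbb Z$, $\Gamma''_P=P\mathbb Z^n\oplus\sqrt{-1}P\mathbb Z^n$, $\Gamma_{P,\tau}=\Gamma'_\tau\ltimes_\rho\Gamma''_P\subset G_M$, and $N=N_{M,P,\tau}=\Gamma_{P,\tau}\backslash G_M$, a compact complex manifold of dimension $n+1$. A $p$-Kähler structure on a complex manifold $X$ of complex dimension $m$ is a $d$-closed real $(p,p)$-form $\Omega$ that is transverse at each point: for every nonzero decomposable $(m-p,0)$-covector $\psi=\eta^1\wedge\dots\wedge\eta^{m-p}$, the form $\Omega\wedge\sigma_{m-p}\psi\wedge\bar\psi$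 is a strictly positive multiple of the standard volume form, where $\sigma_k=(\sqrt{-1})^{k^2}2^{-k}$. *)

theory Defs
  imports "HOL-Analysis.Analysis" "HOL-Combinatorics.Permutations"
begin

text \<open>For the Nakamura group G_M = C x C^n we use 'm = 'n option, where the
coordinate None is w and the coordinate Some i is z_i.\<close>

type_synonym 'm cvec = "complex^'m"

text \<open>A complex-valued k-covector at a point: a function of the argument sequence
v 0, v 1, ... of real tangent vectors (only v 0 .. v (k-1) matter).\<close>

type_synonym 'm cform = "(nat \<Rightarrow> complex^'m) \<Rightarrow> complex"

text \<open>Wedge product of a k-covector and an l-covector (Alt convention,
so that dx /\ dy (e, i e) = 1).\<close>

definition wedge :: "nat \<Rightarrow> nat \<Rightarrow> 'm cform \<Rightarrow> 'm cform \<Rightarrow> 'm cform" where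
  "wedge k l \<alpha> \<beta> = (\<lambda>v.
     (\<Sum>\<sigma> | \<sigma> permutes {..<k+l}.
        (sign \<sigma> :: complex) * \<alpha> (\<lambda>i. v (\<sigma> i)) * \<beta> (\<lambda>i. v (\<sigma> (k + i))))
     / (of_nat (fact k * fact l) :: complex))"

fun wedge_list :: "'m cform list \<Rightarrow> 'm cform" where
  "wedge_list [] = (\<lambda>v. 1)"
| "wedge_list (\<alpha> # \<alpha>s) = wedge 1 (length \<alpha>s) \<alpha> (wedge_list \<alpha>s)"

fun wedge_list2 :: "'m cform list \<Rightarrow> 'm cform" where
  "wedge_list2 [] = (\<lambda>v. 1)"
| "wedge_list2 (\<alpha> # \<alpha>s) = wedge 2 (2 * length \<alpha>s) \<alpha> (wedge_list2 \<alpha>s)"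

definition dz :: "('m::finite) \<Rightarrow> 'm cform" where
  "dz j = (\<lambda>v. v 0 $ j)"

definition dzbar :: "('m::finite) \<Rightarrow> 'm cform" where
  "dzbar j = (\<lambda>v. cnj (v 0 $ j))"

definition dx :: "('m::finite) \<Rightarrow> 'm cform" where
  "dx j = (\<lambda>v. complex_of_real (Re (v 0 $ j)))"

definition dy :: "('m::finite) \<Rightarrow> 'm cform" where
  "dy j = (\<lambda>v. complex_of_real (Im (v 0 $ j)))"

definition cnj_form :: "'m cform \<Rightarrow> 'm cform" where
  "cnj_form \<psi> = (\<lambda>v. cnj (\<psi> v))"

text \<open>Standard volume form dx_1/\dy_1/\.../\dx_m/\dy_m (the factors are 2-forms and
commute, so the enumeration order of the coordinates is irrelevant).\<close>

definition std_vol :: "('m::finite) cform" where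
  "std_vol = wedge_list2 (map (\<lambda>j. wedge 1 1 (dx j) (dy j))
                 (SOME l. distinct l \<and> set l = (UNIV :: 'm set)))"

definition sigma_const :: "nat \<Rightarrow> complex" where
  "sigma_const k = \<i> ^ (k^2) / 2 ^ k"

definition is_pp_covector :: "nat \<Rightarrow> ('m::finite) cform \<Rightarrow> bool" where
  "is_pp_covector p \<alpha> \<longleftrightarrow> (\<exists>c :: (nat \<Rightarrow> 'm) \<Rightarrow> (nat \<Rightarrow> 'm) \<Rightarrow> complex.
      \<alpha> = (\<lambda>v. \<Sum>a\<in>{..<p} \<rightarrow>\<^sub>E (UNIV :: 'm set). \<Sum>b\<in>{..<p} \<rightarrow>\<^sub>E (UNIV :: 'm set).
              c a b * wedge p p (wedge_list (map (\<lambda>i. dz (a i)) [0..<p]))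
                                (wedge_list (map (\<lambda>i. dzbar (b i)) [0..<p])) v))"

definition is_real_covector :: "'m cform \<Rightarrow> bool" where
  "is_real_covector \<alpha> \<longleftrightarrow> (\<forall>v. \<alpha> v \<in> \<real>)"

definition decomposable_k0 :: "nat \<Rightarrow> ('m::finite) cform \<Rightarrow> bool" where
  "decomposable_k0 k \<psi> \<longleftrightarrow> (\<exists>a :: nat \<Rightarrow> 'm \<Rightarrow> complex.
      \<psi> = wedge_list (map (\<lambda>l. (\<lambda>v. \<Sum>j\<in>UNIV. a l j * v 0 $ j)) [0..<k]))"

definition transverse :: "nat \<Rightarrow> ('m::finite) cform \<Rightarrow> bool" where
  "transverse p \<Omega> \<longleftrightarrow> (let q = CARD('m) - p in
     \<forall>\<psi>. decomposable_k0 q \<psi> \<and> \<psi> \<noteq> (\<lambda>v. 0) \<longrightarrow>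
        (\<exists>c::real. c > 0 \<and>
           wedge (2*p) (2*q) \<Omega> (\<lambda>v. sigma_const q * wedge q q \<psi> (cnj_form \<psi>) v)
             = (\<lambda>v. complex_of_real c * std_vol v)))"

text \<open>C-infinity maps (all iterated directional derivatives exist).\<close>

coinductive smooth_map :: "('a::real_normed_vector \<Rightarrow> 'b::real_normed_vector) \<Rightarrow> bool" where
  "(\<And>x. f differentiable (at x)) \<Longrightarrow> (\<And>v. smooth_map (\<lambda>x. frechet_derivative f (at x) v))
     \<Longrightarrow> smooth_map f"

text \<open>Exterior derivative of a k-form field (coordinate formula with constant vector fields).\<close>

definition ext_d :: "nat \<Rightarrow> ('m::finite cvec \<Rightarrow> 'm cform) \<Rightarrow> ('m cvec \<Rightarrow> 'm cform)" where
  "ext_d k \<Omega> = (\<lambda>x v. \<Sum>i\<le>k. (-1) ^ i *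
       frechet_derivative (\<lambda>y. \<Omega> y (\<lambda>j. if j < i then v j else v (Suc j))) (at x) (v i))"

definition p_kaehler_form :: "nat \<Rightarrow> ('m::finite cvec \<Rightarrow> 'm cform) \<Rightarrow> bool" where
  "p_kaehler_form p \<Omega> \<longleftrightarrow>
     (\<forall>v. smooth_map (\<lambda>x. \<Omega> x v)) \<and>
     (\<forall>x. is_pp_covector p (\<Omega> x) \<and> is_real_covector (\<Omega> x) \<and> transverse p (\<Omega> x)) \<and>
     ext_d (2*p) \<Omega> = (\<lambda>x v. 0)"

definition nak_lattice :: "real \<Rightarrow> real^'n^'n \<Rightarrow> (complex \<times> (complex^'n)) set" where
  "nak_lattice \<tau> P = {(of_int a + \<i> * complex_of_real (\<tau> * of_int b),
        (\<chi> i. complex_of_real ((P *v (\<chi> j. real_of_int (u $ j))) $ i)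
              + \<i> * complex_of_real ((P *v (\<chi> j. real_of_int (u' $ j))) $ i)))
      | a b u u'. True}"

definition nak_ltrans :: "('n \<Rightarrow> real) \<Rightarrow> complex \<times> (complex^'n) \<Rightarrow> complex^('n option) \<Rightarrow> complex^('n option)" where
  "nak_ltrans lam \<gamma> x = (\<chi> k. case k of None \<Rightarrow> fst \<gamma> + x $ None
      | Some i \<Rightarrow> snd \<gamma> $ i + complex_of_real (exp (lam i * Re (fst \<gamma>))) * x $ Some i)"

definition nak_dltrans :: "('n \<Rightarrow> real) \<Rightarrow> complex \<times> (complex^'n) \<Rightarrow> complex^('n option) \<Rightarrow> complex^('n option)" where
  "nak_dltrans lam \<gamma> v = (\<chi> k. case k of None \<Rightarrow> v $ None
      | Some i \<Rightarrow> complex_of_real (exp (lam i * Re (fst \<gamma>))) * v $ Some i)"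

text \<open>A p-Kaehler structure on N = Gamma \ G_M, identified with a Gamma-invariant
p-Kaehler form on G_M (pull-back along the holomorphic covering G_M -> N).\<close>

definition nakamura_p_kaehler ::
  "('n::finite \<Rightarrow> real) \<Rightarrow> real^'n^'n \<Rightarrow> real \<Rightarrow> nat \<Rightarrow> (complex^('n option) \<Rightarrow> ('n option) cform) \<Rightarrow> bool" where
  "nakamura_p_kaehler lam P \<tau> p \<Omega> \<longleftrightarrow>
     p_kaehler_form p \<Omega> \<and>
     (\<forall>\<gamma>\<in>nak_lattice \<tau> P. \<forall>x v. \<Omega> (nak_ltrans lam \<gamma> x) (\<lambda>j. nak_dltrans lam \<gamma> (v j)) = \<Omega> x v)"

end

(*
  Suppose \<Omega> were a p-Kaehler form on N, viewed as a \<Gamma>-invariant form on G_M. Since all \<lambda>_i are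
  nonzero and 0 < p < n, some p-element set K of indices has \<Sigma>_{k \<in> K} \<lambda>_k \<noteq> 0. Let h be the
  coefficient of \<Omega> on the real frame e_k, i e_k (k \<in> K). Testing transversality against dz of the
  complementary coordinates shows that h takes values in one open ray. Invariance under the lattice
  makes h periodic in z and multiplies it by \<kappa> = exp (-2 \<Sigma>_{k \<in> K} \<lambda>_k) \<noteq> 1 under the deck
  transformation (w, z) \<mapsto> (w + 1, e^\<lambda> z), and d\<Omega> = 0 expresses the derivative of h in the
  direction Re w through z-derivatives of other periodic coefficients.

  Now average h over the points of mesh 1/N of a fundamental domain of the z-lattice, in the fibre
  over w = s. Because det M = 1 the deck transformation permutes these grid points modulo the
  lattice, so the average over w = 1 is \<kappa> times the average over w = 0, and the latter is bounded
  away from 0 because h lies in a ray. But the s-derivative of the average is an average of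
  z-derivatives of periodic functions, which telescopes up to an error that vanishes as N grows.
  Hence \<kappa> = 1, a contradiction.
*)

theory Submission
  imports Defs
begin

section \<open>Multilinear algebra of covectors\<close>

definition form_arity :: "nat \<Rightarrow> ('m::finite) cform \<Rightarrow> bool" where
  "form_arity d f \<longleftrightarrow> (\<forall>V V'. (\<forall>i<d. V i = V' i) \<longrightarrow> f V = f V')"

definition alternating :: "nat \<Rightarrow> ('m::finite) cform \<Rightarrow> bool" where
  "alternating d f \<longleftrightarrow> (\<forall>\<pi> V. \<pi> permutes {..<d} \<longrightarrow> f (\<lambda>i. V (\<pi> i)) = of_int (sign \<pi>) * f V)"

definition multihomogeneous :: "nat \<Rightarrow> ('m::finite) cform \<Rightarrow> bool" where
  "multihomogeneous d f \<longleftrightarrow> (\<forall>V r. f (\<lambda>i. r i *\<^sub>R V i) = of_real (\<Prod>i<d. r i) * f V)"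

definition vanishes_on :: "nat \<Rightarrow> (complex^'m::finite) set \<Rightarrow> 'm cform \<Rightarrow> bool" where
  "vanishes_on d Z f \<longleftrightarrow> (\<forall>V. (\<exists>i<d. V i \<in> Z) \<longrightarrow> f V = 0)"

lemma form_arityD: "form_arity d f \<Longrightarrow> (\<And>i. i < d \<Longrightarrow> V i = V' i) \<Longrightarrow> f V = f V'"
  unfolding form_arity_def by blast

lemma alternatingD: "alternating d f \<Longrightarrow> \<pi> permutes {..<d} \<Longrightarrow> f (\<lambda>i. V (\<pi> i)) = of_int (sign \<pi>) * f V"
  unfolding alternating_def by blast

lemma multihomogeneousD: "multihomogeneous d f \<Longrightarrow> f (\<lambda>i. r i *\<^sub>R V i) = of_real (\<Prod>i<d. r i) * f V"
  unfolding multihomogeneous_def by blast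

lemma vanishes_onD: "vanishes_on d Z f \<Longrightarrow> i < d \<Longrightarrow> V i \<in> Z \<Longrightarrow> f V = 0"
  unfolding vanishes_on_def by blast

lemma form_arity_wedge:
  assumes "form_arity k \<alpha>" "form_arity l \<beta>"
  shows "form_arity (k+l) (wedge k l \<alpha> \<beta>)"
  unfolding form_arity_def
proof (intro allI impI)
  fix V V' :: "nat \<Rightarrow> complex^'a" assume V: "\<forall>i<k+l. V i = V' i"
  have "\<alpha> (\<lambda>i. V (\<sigma> i)) = \<alpha> (\<lambda>i. V' (\<sigma> i))" "\<beta> (\<lambda>i. V (\<sigma> (k+i))) = \<beta> (\<lambda>i. V' (\<sigma> (k+i)))"
    if "\<sigma> permutes {..<k+l}" for \<sigma>
    using V permutes_in_image[OF that]
    by (auto intro!: form_arityD[OF assms(1)] form_arityD[OF assms(2)])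
  then show "wedge k l \<alpha> \<beta> V = wedge k l \<alpha> \<beta> V'"
    unfolding wedge_def by (intro arg_cong[where f="\<lambda>x. x / _"] sum.cong) auto
qed

lemma sign_compose_permutes:
  fixes d :: nat
  assumes "\<pi> permutes {..<d}" "\<sigma> permutes {..<d}"
  shows "sign (\<pi> \<circ> \<sigma>) = sign \<pi> * sign \<sigma>"
  using permutes_imp_permutation[OF finite_lessThan assms(1)] permutes_imp_permutation[OF finite_lessThan assms(2)]
  by (rule sign_compose)

lemma alternating_wedge: "alternating (k+l) (wedge k l \<alpha> \<beta>)"
  unfolding alternating_def
proof (intro allI impI)
  fix \<pi> and V :: "nat \<Rightarrow> complex^'a" assume \<pi>: "\<pi> permutes {..<k+l}"
  define T where "T \<sigma> = (of_int (sign \<sigma>)::complex) * \<alpha> (\<lambda>i. V (\<sigma> i)) * \<beta> (\<lambda>i. V (\<sigma> (k + i)))" for \<sigma>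
  have summand: "(of_int (sign \<sigma>)::complex) * \<alpha> (\<lambda>i. V (\<pi> (\<sigma> i))) * \<beta> (\<lambda>i. V (\<pi> (\<sigma> (k + i))))
        = of_int (sign \<pi>) * T (\<pi> \<circ> \<sigma>)" if "\<sigma> permutes {..<k+l}" for \<sigma>
  proof -
    have "(of_int (sign \<pi>)::complex) * of_int (sign (\<pi> \<circ> \<sigma>)) = of_int (sign \<pi> * sign \<pi> * sign \<sigma>)"
      by (simp only: sign_compose_permutes[OF \<pi> that] of_int_mult mult.assoc)
    then show ?thesis unfolding T_def by (simp add: mult.assoc[symmetric])
  qed
  have "wedge k l \<alpha> \<beta> (\<lambda>i. V (\<pi> i))
      = (\<Sum>\<sigma> | \<sigma> permutes {..<k+l}. of_int (sign \<pi>) * T (\<pi> \<circ> \<sigma>)) / of_nat (fact k * fact l)"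
    unfolding wedge_def using summand by (intro arg_cong[where f="\<lambda>x. x / _"] sum.cong) auto
  also have "(\<Sum>\<sigma> | \<sigma> permutes {..<k+l}. of_int (sign \<pi>) * T (\<pi> \<circ> \<sigma>))
      = of_int (sign \<pi>) * (\<Sum>\<sigma> | \<sigma> permutes {..<k+l}. T \<sigma>)"
    by (simp add: sum_distrib_left[symmetric] setum_permutations_compose_left[OF \<pi>, symmetric])
  finally show "wedge k l \<alpha> \<beta> (\<lambda>i. V (\<pi> i)) = of_int (sign \<pi>) * wedge k l \<alpha> \<beta> V"
    unfolding wedge_def T_def by simp
qed

lemma prod_lessThan_add: "(\<Prod>i<k+l. f i) = (\<Prod>i<k. f i) * (\<Prod>i<l. f (k+i))"
  for f :: "nat \<Rightarrow> 'a::comm_monoid_mult"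
proof -
  have "(\<Prod>i<k+l. f i) = (\<Prod>i\<in>{0..<k}. f i) * (\<Prod>i\<in>{k..<k+l}. f i)"
    by (simp add: prod.atLeastLessThan_concat lessThan_atLeast0)
  also have "(\<Prod>i\<in>{k..<k+l}. f i) = (\<Prod>i<l. f (k+i))"
    using prod.shift_bounds_nat_ivl[of f 0 k l] by (simp add: lessThan_atLeast0 add.commute)
  finally show ?thesis by (simp add: lessThan_atLeast0)
qed

lemma multihomogeneous_wedge:
  assumes "multihomogeneous k \<alpha>" "multihomogeneous l \<beta>"
  shows "multihomogeneous (k+l) (wedge k l \<alpha> \<beta>)"
  unfolding multihomogeneous_def
proof (intro allI)
  fix V :: "nat \<Rightarrow> complex^'a" and r :: "nat \<Rightarrow> real"
  have summand: "(of_int (sign \<sigma>)::complex) * \<alpha> (\<lambda>i. r (\<sigma> i) *\<^sub>R V (\<sigma> i)) * \<beta> (\<lambda>i. r (\<sigma> (k+i)) *\<^sub>R V (\<sigma> (k + i)))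
     = of_real (\<Prod>i<k+l. r i) * (of_int (sign \<sigma>) * \<alpha> (\<lambda>i. V (\<sigma> i)) * \<beta> (\<lambda>i. V (\<sigma> (k + i))))"
    if \<sigma>: "\<sigma> permutes {..<k+l}" for \<sigma>
  proof -
    have "(\<Prod>i<k. r (\<sigma> i)) * (\<Prod>i<l. r (\<sigma> (k+i))) = (\<Prod>i<k+l. r (\<sigma> i))"
      by (rule prod_lessThan_add[symmetric])
    also have "\<dots> = (\<Prod>i<k+l. r i)" using prod.permute[OF \<sigma>, of r] by (simp add: o_def)
    finally have "(\<Prod>i<k. r (\<sigma> i)) * (\<Prod>i<l. r (\<sigma> (k+i))) = (\<Prod>i<k+l. r i)" .
    then show ?thesis
      unfolding multihomogeneousD[OF assms(1), of "\<lambda>i. r (\<sigma> i)"] multihomogeneousD[OF assms(2), of "\<lambda>i. r (\<sigma> (k+i))"]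
      by (metis (no_types, lifting) mult.assoc mult.left_commute of_real_mult)
  qed
  show "wedge k l \<alpha> \<beta> (\<lambda>i. r i *\<^sub>R V i) = of_real (\<Prod>i<k+l. r i) * wedge k l \<alpha> \<beta> V"
    unfolding wedge_def by (simp add: summand sum_distrib_left)
qed

lemma vanishes_on_wedge:
  assumes "vanishes_on k Z \<alpha>" "vanishes_on l Z \<beta>"
  shows "vanishes_on (k+l) Z (wedge k l \<alpha> \<beta>)"
  unfolding vanishes_on_def
proof (intro allI impI)
  fix V :: "nat \<Rightarrow> complex^'a" assume "\<exists>i<k+l. V i \<in> Z"
  then obtain i where i: "i < k+l" "V i \<in> Z" by blast
  have "\<alpha> (\<lambda>i. V (\<sigma> i)) * \<beta> (\<lambda>i. V (\<sigma> (k + i))) = 0" if \<sigma>: "\<sigma> permutes {..<k+l}" for \<sigma>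
  proof -
    define j where "j = inv \<sigma> i"
    have j: "\<sigma> j = i" "j < k + l"
      unfolding j_def using permutes_inverses(1)[OF \<sigma>] permutes_in_image[OF permutes_inv[OF \<sigma>]] i by auto
    show ?thesis
    proof (cases "j < k")
      case True then show ?thesis using vanishes_onD[OF assms(1), of j "\<lambda>i. V (\<sigma> i)"] j i by simp
    next
      case False
      then have "j = k + (j - k)" "j - k < l" using j by auto
      then show ?thesis using vanishes_onD[OF assms(2), of "j - k" "\<lambda>i. V (\<sigma> (k+i))"] j i by simp
    qed
  qed
  then have "(\<Sum>\<sigma> | \<sigma> permutes {..<k+l}. (of_int (sign \<sigma>)::complex) * \<alpha> (\<lambda>i. V (\<sigma> i)) * \<beta> (\<lambda>i. V (\<sigma> (k + i)))) = 0"
    by (intro sum.neutral) (simp add: mult.assoc)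
  then show "wedge k l \<alpha> \<beta> V = 0" unfolding wedge_def by simp
qed

lemma inj_image_subset_complement:
  assumes "inj f" "finite A" "f ` A \<subseteq> A" "x \<notin> A"
  shows "f x \<notin> A"
proof
  assume "f x \<in> A"
  moreover have "f ` A = A" using assms by (intro endo_inj_surj) (auto intro: inj_on_subset)
  ultimately obtain a where "a \<in> A" "f x = f a" by auto
  then show False using assms(1,4) by (auto dest: injD)
qed

lemma permutes_block_iff:
  fixes k l :: nat
  assumes \<sigma>: "\<sigma> permutes {..<k+l}"
  shows "(\<forall>i<k. \<sigma> i < k) \<longleftrightarrow> (\<forall>i<l. k \<le> \<sigma> (k+i))"
proof
  assume "\<forall>i<k. \<sigma> i < k"
  then have "\<sigma> (k+i) \<notin> {..<k}" for i
    by (intro inj_image_subset_complement[OF permutes_inj[OF \<sigma>]]) auto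
  then show "\<forall>i<l. k \<le> \<sigma> (k+i)" by (simp add: not_less)
next
  assume ge: "\<forall>i<l. k \<le> \<sigma> (k+i)"
  have "\<sigma> ` {k..<k+l} \<subseteq> {k..<k+l}"
  proof
    fix y assume "y \<in> \<sigma> ` {k..<k+l}"
    then obtain j where j: "j \<in> {k..<k+l}" "y = \<sigma> j" by auto
    then have "k \<le> \<sigma> j" using ge[rule_format, of "j - k"] by auto
    moreover have "\<sigma> j < k + l" using permutes_in_image[OF \<sigma>, of j] j by simp
    ultimately show "y \<in> {k..<k+l}" using j by simp
  qed
  then have "\<sigma> i \<notin> {k..<k+l}" if "i < k" for i
    using that by (intro inj_image_subset_complement[OF permutes_inj[OF \<sigma>]]) auto
  moreover have "\<sigma> i < k + l" if "i < k" for i using permutes_in_image[OF \<sigma>, of i] that by simp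
  ultimately show "\<forall>i<k. \<sigma> i < k" by fastforce
qed

lemma shift_permutation_apply:
  fixes k l :: nat
  assumes "\<pi> permutes {..<l}"
  shows "map_permutation {..<l} ((+) k) \<pi> j = (if k \<le> j \<and> j < k + l then k + \<pi> (j - k) else j)"
proof (cases "k \<le> j \<and> j < k + l")
  case True
  then have "j = k + (j - k)" "j - k < l" by auto
  then show ?thesis using True map_permutation_apply[of "(+) k" "{..<l}" "j - k" \<pi>] by simp
next
  case False
  then have "j \<notin> (+) k ` {..<l}" by auto
  then show ?thesis using False unfolding map_permutation_def restrict_id_def by auto
qed

lemma shift_permutation_permutes:
  fixes k l :: nat
  assumes "\<pi> permutes {..<l}"
  shows "map_permutation {..<l} ((+) k) \<pi> permutes {..<k+l}"
proof -
  have "(+) k ` {..<l} = {k..<k+l}"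
  proof (intro equalityI subsetI)
    fix x assume "x \<in> {k..<k+l}"
    then have "x = k + (x - k)" "x - k \<in> {..<l}" by auto
    then show "x \<in> (+) k ` {..<l}" by blast
  qed auto
  then have "map_permutation {..<l} ((+) k) \<pi> permutes {k..<k+l}"
    using map_permutation_permutes[of "(+) k" "{..<l}" _ \<pi>] assms by (simp add: bij_betw_def)
  then show ?thesis by (rule permutes_subset) auto
qed

lemma sign_block_permutation:
  fixes k l :: nat
  assumes "\<pi>1 permutes {..<k}" "\<pi>2 permutes {..<l}"
  shows "sign (\<pi>1 \<circ> map_permutation {..<l} ((+) k) \<pi>2) = sign \<pi>1 * sign \<pi>2"
proof -
  have "permutation (map_permutation {..<l} ((+) k) \<pi>2)"
    using shift_permutation_permutes[OF assms(2)] permutes_imp_permutation by blast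
  moreover have "sign (map_permutation {..<l} ((+) k) \<pi>2) = sign \<pi>2"
    by (rule sign_map_permutation) (use assms in auto)
  moreover have "permutation \<pi>1" using permutes_imp_permutation[of "{..<k}"] assms(1) by simp
  ultimately show ?thesis by (simp add: sign_compose)
qed

lemma block_permutation_merge:
  fixes k l :: nat
  assumes p: "\<pi>1 permutes {..<k}" "\<pi>2 permutes {..<l}"
  defines "\<sigma> \<equiv> \<pi>1 \<circ> map_permutation {..<l} ((+) k) \<pi>2"
  shows "\<sigma> permutes {..<k+l}" "\<forall>i<k. \<sigma> i < k"
    and "(\<lambda>i. if i < k then \<sigma> i else i) = \<pi>1" "(\<lambda>i. if i < l then \<sigma> (k+i) - k else i) = \<pi>2"
proof -
  note sh = shift_permutation_apply[OF p(2), of k]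
  show "\<sigma> permutes {..<k+l}"
    unfolding \<sigma>_def by (intro permutes_compose shift_permutation_permutes p(2) permutes_subset[OF p(1)]) auto
  show "\<forall>i<k. \<sigma> i < k" unfolding \<sigma>_def using permutes_in_image[OF p(1)] by (simp add: sh)
  have "(if i < k then \<sigma> i else i) = \<pi>1 i" for i
    unfolding \<sigma>_def using permutes_not_in[OF p(1), of i] by (simp add: sh)
  then show "(\<lambda>i. if i < k then \<sigma> i else i) = \<pi>1" ..
  have "(if i < l then \<sigma> (k+i) - k else i) = \<pi>2 i" for i
    unfolding \<sigma>_def using permutes_not_in[OF p(1), of "k + \<pi>2 i"] permutes_not_in[OF p(2), of i] by (simp add: sh)
  then show "(\<lambda>i. if i < l then \<sigma> (k+i) - k else i) = \<pi>2" ..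
qed

lemma block_permutation_split:
  fixes k l :: nat
  assumes \<sigma>: "\<sigma> permutes {..<k+l}" and low: "\<forall>i<k. \<sigma> i < k"
  defines "\<pi>1 \<equiv> \<lambda>i. if i < k then \<sigma> i else i" and "\<pi>2 \<equiv> \<lambda>i. if i < l then \<sigma> (k+i) - k else i"
  shows "\<pi>1 permutes {..<k}" "\<pi>2 permutes {..<l}" "\<pi>1 \<circ> map_permutation {..<l} ((+) k) \<pi>2 = \<sigma>"
proof -
  have high: "k \<le> \<sigma> (k+i)" if "i < l" for i using permutes_block_iff[OF \<sigma>] low that by blast
  have top: "\<sigma> (k+i) < k + l" if "i < l" for i using permutes_in_image[OF \<sigma>] that by simp
  have inj\<sigma>: "inj \<sigma>" by (rule permutes_inj[OF \<sigma>])
  show p1: "\<pi>1 permutes {..<k}"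
  proof (rule bij_imp_permutes)
    have "inj_on \<pi>1 {..<k}" unfolding \<pi>1_def inj_on_def using inj\<sigma> by (auto dest: injD)
    moreover have "\<pi>1 ` {..<k} \<subseteq> {..<k}" unfolding \<pi>1_def using low by auto
    ultimately show "bij_betw \<pi>1 {..<k} {..<k}" by (simp add: bij_betw_def endo_inj_surj)
  qed (simp add: \<pi>1_def)
  show p2: "\<pi>2 permutes {..<l}"
  proof (rule bij_imp_permutes)
    have "inj_on \<pi>2 {..<l}"
    proof (rule inj_onI)
      fix a b assume "a \<in> {..<l}" "b \<in> {..<l}" "\<pi>2 a = \<pi>2 b"
      then have "\<sigma> (k+a) - k = \<sigma> (k+b) - k" "a < l" "b < l" unfolding \<pi>2_def by auto
      then have "\<sigma> (k+a) = \<sigma> (k+b)" using high[of a] high[of b] by linarith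
      then show "a = b" by (simp add: inj_eq[OF inj\<sigma>])
    qed
    moreover have "\<pi>2 ` {..<l} \<subseteq> {..<l}" unfolding \<pi>2_def using high top by fastforce
    ultimately show "bij_betw \<pi>2 {..<l} {..<l}" by (simp add: bij_betw_def endo_inj_surj)
  qed (simp add: \<pi>2_def)
  have "(\<pi>1 \<circ> map_permutation {..<l} ((+) k) \<pi>2) j = \<sigma> j" for j
  proof -
    consider "j < k" | "k \<le> j" "j < k + l" | "k + l \<le> j" by linarith
    then show ?thesis
    proof cases
      case 2
      then have "j = k + (j - k)" "j - k < l" by auto
      then show ?thesis using 2 high[of "j - k"] unfolding o_def shift_permutation_apply[OF p2]
        by (simp add: \<pi>1_def \<pi>2_def)
    qed (unfold o_def shift_permutation_apply[OF p2], simp_all add: \<pi>1_def permutes_not_in[OF \<sigma>])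
  qed
  then show "\<pi>1 \<circ> map_permutation {..<l} ((+) k) \<pi>2 = \<sigma>" ..
qed

lemma bij_betw_block_permutations:
  fixes k l :: nat
  shows "bij_betw (\<lambda>(\<pi>1, \<pi>2). \<pi>1 \<circ> map_permutation {..<l} ((+) k) \<pi>2)
     ({\<pi>. \<pi> permutes {..<k}} \<times> {\<pi>. \<pi> permutes {..<l}})
     {\<sigma>. \<sigma> permutes {..<k+l} \<and> (\<forall>i<k. \<sigma> i < k)}"
proof (rule bij_betw_byWitness[where
      f'="\<lambda>\<sigma>. (\<lambda>i. if i < k then \<sigma> i else i, \<lambda>i. if i < l then \<sigma> (k+i) - k else i)"])
  show "\<forall>a\<in>{\<pi>. \<pi> permutes {..<k}} \<times> {\<pi>. \<pi> permutes {..<l}}.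
      (\<lambda>\<sigma>. (\<lambda>i. if i < k then \<sigma> i else i, \<lambda>i. if i < l then \<sigma> (k+i) - k else i))
        ((\<lambda>(\<pi>1, \<pi>2). \<pi>1 \<circ> map_permutation {..<l} ((+) k) \<pi>2) a) = a"
    using block_permutation_merge(3,4) by auto
  show "(\<lambda>(\<pi>1, \<pi>2). \<pi>1 \<circ> map_permutation {..<l} ((+) k) \<pi>2) ` ({\<pi>. \<pi> permutes {..<k}} \<times> {\<pi>. \<pi> permutes {..<l}})
      \<subseteq> {\<sigma>. \<sigma> permutes {..<k+l} \<and> (\<forall>i<k. \<sigma> i < k)}"
    using block_permutation_merge(1,2) by auto
qed (use block_permutation_split in auto)

text \<open>When every mixed term of the alternation sum vanishes, only the k! l! block permutations
  survive, and each of them contributes the same product.\<close>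

lemma wedge_eq_mult_if_mixed_terms_vanish:
  assumes \<alpha>: "form_arity k \<alpha>" "alternating k \<alpha>" and \<beta>: "form_arity l \<beta>" "alternating l \<beta>"
    and mixed: "\<And>\<sigma>. \<sigma> permutes {..<k+l} \<Longrightarrow> \<exists>i<k. k \<le> \<sigma> i \<Longrightarrow>
               \<alpha> (\<lambda>i. V (\<sigma> i)) * \<beta> (\<lambda>i. V (\<sigma> (k+i))) = 0"
  shows "wedge k l \<alpha> \<beta> V = \<alpha> V * \<beta> (\<lambda>i. V (k+i))"
proof -
  define T where "T \<sigma> = (of_int (sign \<sigma>)::complex) * \<alpha> (\<lambda>i. V (\<sigma> i)) * \<beta> (\<lambda>i. V (\<sigma> (k + i)))" for \<sigma>
  define B where "B = {\<sigma>. \<sigma> permutes {..<k+l} \<and> (\<forall>i<k. \<sigma> i < k)}"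
  define Pk where "Pk = {\<pi>. \<pi> permutes {..<k}}"
  define Pl where "Pl = {\<pi>. \<pi> permutes {..<l}}"
  have "T \<sigma> = 0" if "\<sigma> permutes {..<k+l}" "\<sigma> \<notin> B" for \<sigma>
  proof -
    from that have "\<exists>i<k. k \<le> \<sigma> i" unfolding B_def by (auto simp: not_less)
    then show ?thesis using mixed[OF that(1)] unfolding T_def by (simp add: mult.assoc)
  qed
  then have "(\<Sum>\<sigma> | \<sigma> permutes {..<k+l}. T \<sigma>) = sum T B"
    by (intro sum.mono_neutral_right) (auto simp: B_def finite_permutations)
  also have "\<dots> = (\<Sum>(\<pi>1, \<pi>2)\<in>Pk \<times> Pl. T (\<pi>1 \<circ> map_permutation {..<l} ((+) k) \<pi>2))"
    using sum.reindex_bij_betw[OF bij_betw_block_permutations, of T] unfolding B_def Pk_def Pl_def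
    by (simp add: case_prod_beta')
  also have "\<dots> = (\<Sum>_\<in>Pk \<times> Pl. \<alpha> V * \<beta> (\<lambda>i. V (k+i)))"
  proof (intro sum.cong refl, clarify)
    fix \<pi>1 \<pi>2 assume "\<pi>1 \<in> Pk" "\<pi>2 \<in> Pl"
    then have p: "\<pi>1 permutes {..<k}" "\<pi>2 permutes {..<l}" unfolding Pk_def Pl_def by auto
    note sh = shift_permutation_apply[OF p(2), of k]
    have "\<alpha> (\<lambda>i. V ((\<pi>1 \<circ> map_permutation {..<l} ((+) k) \<pi>2) i)) = \<alpha> (\<lambda>i. V (\<pi>1 i))"
      by (rule form_arityD[OF \<alpha>(1)]) (simp add: sh)
    also have "\<dots> = of_int (sign \<pi>1) * \<alpha> V" by (rule alternatingD[OF \<alpha>(2) p(1)])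
    finally have a: "\<alpha> (\<lambda>i. V ((\<pi>1 \<circ> map_permutation {..<l} ((+) k) \<pi>2) i)) = of_int (sign \<pi>1) * \<alpha> V" .
    have "\<beta> (\<lambda>i. V ((\<pi>1 \<circ> map_permutation {..<l} ((+) k) \<pi>2) (k+i))) = \<beta> (\<lambda>i. V (k + \<pi>2 i))"
      by (rule form_arityD[OF \<beta>(1)]) (simp add: sh permutes_not_in[OF p(1)])
    also have "\<dots> = of_int (sign \<pi>2) * \<beta> (\<lambda>i. V (k+i))" by (rule alternatingD[OF \<beta>(2) p(2)])
    finally have b: "\<beta> (\<lambda>i. V ((\<pi>1 \<circ> map_permutation {..<l} ((+) k) \<pi>2) (k+i))) = of_int (sign \<pi>2) * \<beta> (\<lambda>i. V (k+i))" .
    have "T (\<pi>1 \<circ> map_permutation {..<l} ((+) k) \<pi>2)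
        = of_int (sign \<pi>1 * sign \<pi>2) * (of_int (sign \<pi>1) * \<alpha> V) * (of_int (sign \<pi>2) * \<beta> (\<lambda>i. V (k+i)))"
      by (simp only: T_def sign_block_permutation[OF p] a b mult.assoc)
    also have "\<dots> = \<alpha> V * \<beta> (\<lambda>i. V (k+i))"
      by (cases "evenperm \<pi>1"; cases "evenperm \<pi>2") (simp_all add: sign_def)
    finally show "T (\<pi>1 \<circ> map_permutation {..<l} ((+) k) \<pi>2) = \<alpha> V * \<beta> (\<lambda>i. V (k+i))" .
  qed
  also have "\<dots> = of_nat (fact k * fact l) * (\<alpha> V * \<beta> (\<lambda>i. V (k+i)))"
    by (simp add: Pk_def Pl_def card_cartesian_product card_permutations)
  finally show ?thesis unfolding wedge_def T_def by simp
qed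

lemma wedge_eq_mult_if_vanishes_on_left:
  assumes "form_arity k \<alpha>" "alternating k \<alpha>" "form_arity l \<beta>" "alternating l \<beta>" "vanishes_on k Z \<alpha>"
    and "\<And>i. i < l \<Longrightarrow> V (k+i) \<in> Z"
  shows "wedge k l \<alpha> \<beta> V = \<alpha> V * \<beta> (\<lambda>i. V (k+i))"
proof (rule wedge_eq_mult_if_mixed_terms_vanish[OF assms(1-4)])
  fix \<sigma> assume \<sigma>: "\<sigma> permutes {..<k+l}" and "\<exists>i<k. k \<le> \<sigma> i"
  then obtain i where i: "i < k" "k \<le> \<sigma> i" by blast
  have "\<sigma> i = k + (\<sigma> i - k)" "\<sigma> i - k < l" using i permutes_in_image[OF \<sigma>, of i] by auto
  then have "V (\<sigma> i) \<in> Z" using assms(6) by metis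
  then show "\<alpha> (\<lambda>i. V (\<sigma> i)) * \<beta> (\<lambda>i. V (\<sigma> (k+i))) = 0" using vanishes_onD[OF assms(5) i(1)] by simp
qed

lemma wedge_eq_mult_if_vanishes_on_right:
  assumes "form_arity k \<alpha>" "alternating k \<alpha>" "form_arity l \<beta>" "alternating l \<beta>" "vanishes_on l Z \<beta>"
    and "\<And>i. i < k \<Longrightarrow> V i \<in> Z"
  shows "wedge k l \<alpha> \<beta> V = \<alpha> V * \<beta> (\<lambda>i. V (k+i))"
proof (rule wedge_eq_mult_if_mixed_terms_vanish[OF assms(1-4)])
  fix \<sigma> assume \<sigma>: "\<sigma> permutes {..<k+l}" and "\<exists>i<k. k \<le> \<sigma> i"
  then obtain i where i: "i < l" "\<sigma> (k+i) < k" using permutes_block_iff[OF \<sigma>] by (meson not_less)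
  then show "\<alpha> (\<lambda>i. V (\<sigma> i)) * \<beta> (\<lambda>i. V (\<sigma> (k+i))) = 0"
    using vanishes_onD[OF assms(5) i(1), of "\<lambda>i. V (\<sigma> (k+i))"] assms(6) by simp
qed

lemma form_arity_wedge_list:
  "(\<And>x. x \<in> set xs \<Longrightarrow> form_arity 1 (f x)) \<Longrightarrow> form_arity (length xs) (wedge_list (map f xs))"
proof (induction xs)
  case Nil then show ?case unfolding form_arity_def by simp
next
  case (Cons x xs) then show ?case using form_arity_wedge[of 1 "f x" "length xs"] by simp
qed

lemma alternating_wedge_list: "alternating (length \<alpha>s) (wedge_list \<alpha>s)"
proof (cases \<alpha>s)
  case Nil then show ?thesis unfolding alternating_def by simp
next
  case (Cons \<alpha> \<beta>s) then show ?thesis using alternating_wedge[of 1 "length \<beta>s" \<alpha> "wedge_list \<beta>s"] by simp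
qed

lemma multihomogeneous_wedge_list:
  "(\<And>x. x \<in> set xs \<Longrightarrow> multihomogeneous 1 (f x)) \<Longrightarrow> multihomogeneous (length xs) (wedge_list (map f xs))"
proof (induction xs)
  case Nil then show ?case unfolding multihomogeneous_def by simp
next
  case (Cons x xs) then show ?case using multihomogeneous_wedge[of 1 "f x" "length xs"] by simp
qed

lemma vanishes_on_wedge_list:
  "(\<And>x. x \<in> set xs \<Longrightarrow> vanishes_on 1 Z (f x)) \<Longrightarrow> vanishes_on (length xs) Z (wedge_list (map f xs))"
proof (induction xs)
  case Nil then show ?case unfolding vanishes_on_def by simp
next
  case (Cons x xs) then show ?case using vanishes_on_wedge[of 1 Z "f x" "length xs"] by simp
qed

lemma form_arity_wedge_list2:
  "(\<And>x. x \<in> set xs \<Longrightarrow> form_arity 2 (f x)) \<Longrightarrow> form_arity (2 * length xs) (wedge_list2 (map f xs))"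
proof (induction xs)
  case Nil then show ?case unfolding form_arity_def by simp
next
  case (Cons x xs) then show ?case using form_arity_wedge[of 2 "f x" "2 * length xs"] by simp
qed

lemma alternating_wedge_list2: "alternating (2 * length \<alpha>s) (wedge_list2 \<alpha>s)"
proof (cases \<alpha>s)
  case Nil then show ?thesis unfolding alternating_def by simp
next
  case (Cons \<alpha> \<beta>s) then show ?thesis using alternating_wedge[of 2 "2 * length \<beta>s" \<alpha> "wedge_list2 \<beta>s"] by simp
qed

lemma form_arity_cnj_form: "form_arity d \<psi> \<Longrightarrow> form_arity d (cnj_form \<psi>)"
  unfolding form_arity_def cnj_form_def by metis

lemma vanishes_on_cnj_form: "vanishes_on d Z \<psi> \<Longrightarrow> vanishes_on d Z (cnj_form \<psi>)"
  unfolding vanishes_on_def cnj_form_def by simp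

lemma form_arity_scale: "form_arity d f \<Longrightarrow> form_arity d (\<lambda>v. c * f v)"
  unfolding form_arity_def by metis

lemma alternating_scale: "alternating d f \<Longrightarrow> alternating d (\<lambda>v. c * f v)"
  unfolding alternating_def by (simp add: mult_ac)

lemma vanishes_on_scale: "vanishes_on d Z f \<Longrightarrow> vanishes_on d Z (\<lambda>v. c * f v)"
  unfolding vanishes_on_def by simp

definition one_form :: "(complex^'m::finite \<Rightarrow> complex) \<Rightarrow> 'm cform" where
  "one_form L = (\<lambda>v. L (v 0))"

lemma form_arity_one_form: "form_arity 1 (one_form L)"
  unfolding form_arity_def one_form_def by simp

lemma alternating_one_form: "alternating 1 (one_form L)"
  unfolding alternating_def
proof (intro allI impI)
  fix \<pi> :: "nat \<Rightarrow> nat" and V assume \<pi>: "\<pi> permutes {..<1}"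
  have "\<pi> = id"
  proof
    fix i show "\<pi> i = id i"
      using permutes_in_image[OF \<pi>, of 0] permutes_not_in[OF \<pi>, of i] by (cases "i = 0") auto
  qed
  then show "one_form L (\<lambda>i. V (\<pi> i)) = of_int (sign \<pi>) * one_form L V" by simp
qed

lemma vanishes_on_one_form: "(\<And>x. x \<in> Z \<Longrightarrow> L x = 0) \<Longrightarrow> vanishes_on 1 Z (one_form L)"
  unfolding vanishes_on_def one_form_def by auto

lemma dz_eq_one_form: "dz j = one_form (\<lambda>x. x $ j)"
  and dzbar_eq_one_form: "dzbar j = one_form (\<lambda>x. cnj (x $ j))"
  and dx_eq_one_form: "dx j = one_form (\<lambda>x. of_real (Re (x $ j)))"
  and dy_eq_one_form: "dy j = one_form (\<lambda>x. of_real (Im (x $ j)))"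
  unfolding dz_def dzbar_def dx_def dy_def one_form_def by simp_all

lemma multihomogeneous_one_form:
  "(\<And>r x. L (r *\<^sub>R x) = of_real r * L x) \<Longrightarrow> multihomogeneous 1 (one_form L)"
  unfolding multihomogeneous_def one_form_def by simp

definition pp_monomial :: "nat \<Rightarrow> (nat \<Rightarrow> 'm) \<Rightarrow> (nat \<Rightarrow> 'm) \<Rightarrow> ('m::finite) cform" where
  "pp_monomial p a b = wedge p p (wedge_list (map (\<lambda>i. dz (a i)) [0..<p])) (wedge_list (map (\<lambda>i. dzbar (b i)) [0..<p]))"

lemma form_arity_pp_monomial: "form_arity (2*p) (pp_monomial p a b)"
proof -
  have "form_arity (length [0..<p]) (wedge_list (map (\<lambda>i. dz (a i)) [0..<p]))"
    "form_arity (length [0..<p]) (wedge_list (map (\<lambda>i. dzbar (b i)) [0..<p]))"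
    by (rule form_arity_wedge_list, simp only: dz_eq_one_form dzbar_eq_one_form form_arity_one_form)+
  then show ?thesis unfolding pp_monomial_def mult_2 using form_arity_wedge[of p _ p] by simp
qed

lemma alternating_pp_monomial: "alternating (2*p) (pp_monomial p a b)"
  unfolding pp_monomial_def mult_2 by (rule alternating_wedge)

lemma multihomogeneous_pp_monomial: "multihomogeneous (2*p) (pp_monomial p a b)"
proof -
  have d: "multihomogeneous 1 (dz j)" "multihomogeneous 1 (dzbar j)" for j
    unfolding dz_eq_one_form dzbar_eq_one_form
    by (intro multihomogeneous_one_form; simp only: vector_scaleR_component; simp add: scaleR_conv_of_real)+
  have "multihomogeneous (length [0..<p]) (wedge_list (map (\<lambda>i. dz (a i)) [0..<p]))"
    "multihomogeneous (length [0..<p]) (wedge_list (map (\<lambda>i. dzbar (b i)) [0..<p]))"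
    by (rule multihomogeneous_wedge_list, rule d)+
  then show ?thesis unfolding pp_monomial_def mult_2 using multihomogeneous_wedge[of p _ p] by simp
qed

lemma pp_covector_expansion:
  assumes "is_pp_covector p \<alpha>"
  obtains c where "\<alpha> = (\<lambda>v. \<Sum>a\<in>{..<p} \<rightarrow>\<^sub>E (UNIV :: 'm::finite set). \<Sum>b\<in>{..<p} \<rightarrow>\<^sub>E (UNIV :: 'm set).
                        c a b * pp_monomial p a b v)"
  using assms unfolding is_pp_covector_def pp_monomial_def by blast

lemma form_arity_pp_covector: "is_pp_covector p (\<alpha>::('m::finite) cform) \<Longrightarrow> form_arity (2*p) \<alpha>"
  by (erule pp_covector_expansion) (auto simp: form_arity_def intro!: sum.cong form_arityD[OF form_arity_pp_monomial])

lemma alternating_pp_covector: "is_pp_covector p (\<alpha>::('m::finite) cform) \<Longrightarrow> alternating (2*p) \<alpha>"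
  by (erule pp_covector_expansion)
     (simp add: alternating_def alternatingD[OF alternating_pp_monomial] sum_distrib_left mult_ac)

lemma multihomogeneous_pp_covector: "is_pp_covector p (\<alpha>::('m::finite) cform) \<Longrightarrow> multihomogeneous (2*p) \<alpha>"
  by (erule pp_covector_expansion)
     (simp add: multihomogeneous_def multihomogeneousD[OF multihomogeneous_pp_monomial] sum_distrib_left mult_ac)

definition coord_frame :: "'m list \<Rightarrow> nat \<Rightarrow> complex^'m::finite" where
  "coord_frame ks i = axis (ks ! (i div 2)) (if even i then 1 else \<i>)"

definition dxdy :: "'m \<Rightarrow> ('m::finite) cform" where
  "dxdy j = wedge 1 1 (dx j) (dy j)"

lemma form_arity_dxdy: "form_arity 2 (dxdy j)"
  unfolding dxdy_def dx_eq_one_form dy_eq_one_form one_add_one[symmetric]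
  by (rule form_arity_wedge[OF form_arity_one_form form_arity_one_form])

lemma alternating_dxdy: "alternating 2 (dxdy j)"
  unfolding dxdy_def one_add_one[symmetric] by (rule alternating_wedge)

lemma vanishes_on_dxdy: "vanishes_on 2 {v. v $ j = 0} (dxdy j)"
proof -
  have "vanishes_on (1+1) {v. v $ j = 0} (wedge 1 1 (dx j) (dy j))"
    unfolding dx_eq_one_form dy_eq_one_form by (intro vanishes_on_wedge vanishes_on_one_form) auto
  then show ?thesis unfolding dxdy_def one_add_one .
qed

lemma dxdy_eq_1:
  assumes "V 0 = axis j 1" "V 1 = axis j \<i>"
  shows "dxdy j V = 1"
proof -
  have "wedge 1 1 (dx j) (dy j) V = dx j V * dy j (\<lambda>i. V (1+i))"
    unfolding dx_eq_one_form dy_eq_one_form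
    by (rule wedge_eq_mult_if_vanishes_on_left[OF form_arity_one_form alternating_one_form
          form_arity_one_form alternating_one_form vanishes_on_one_form[where Z="{v. Re (v $ j) = 0}"]])
       (use assms in auto)
  then show ?thesis unfolding dxdy_def using assms by (simp add: dx_def dy_def)
qed

lemma form_arity_wedge_list2_dxdy: "form_arity (2 * length ks) (wedge_list2 (map dxdy ks))"
  by (rule form_arity_wedge_list2) (rule form_arity_dxdy)

lemma alternating_wedge_list2_dxdy: "alternating (2 * length ks) (wedge_list2 (map dxdy ks))"
  using alternating_wedge_list2[of "map dxdy ks"] by simp

lemma wedge_list2_dxdy_coord_frame: "distinct ks \<Longrightarrow> wedge_list2 (map dxdy ks) (coord_frame ks) = 1"
proof (induction ks)
  case Nil then show ?case by simp
next
  case (Cons j ks)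
  have "coord_frame (j # ks) (2+i) \<in> {v. v $ j = 0}" if "i < 2 * length ks" for i
  proof -
    have "ks ! (i div 2) \<noteq> j" using Cons.prems that by (metis distinct.simps(2) less_mult_imp_div_less mult.commute nth_mem)
    then show ?thesis by (simp add: coord_frame_def axis_def)
  qed
  then have "wedge 2 (2 * length ks) (dxdy j) (wedge_list2 (map dxdy ks)) (coord_frame (j # ks))
      = dxdy j (coord_frame (j # ks)) * wedge_list2 (map dxdy ks) (\<lambda>i. coord_frame (j # ks) (2+i))"
    by (intro wedge_eq_mult_if_vanishes_on_left[OF form_arity_dxdy alternating_dxdy
          form_arity_wedge_list2_dxdy alternating_wedge_list2_dxdy vanishes_on_dxdy])
  moreover have "dxdy j (coord_frame (j # ks)) = 1" by (rule dxdy_eq_1) (simp_all add: coord_frame_def)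
  moreover have "(\<lambda>i. coord_frame (j # ks) (2+i)) = coord_frame ks" by (simp add: coord_frame_def fun_eq_iff)
  ultimately show ?case using Cons by simp
qed

lemma coord_frame_reorder:
  assumes ks: "distinct ks" and ls: "distinct ls" and same: "set ks = set ls"
  obtains \<pi> where "\<pi> permutes {..<2 * length ks}" "\<And>i. i < 2 * length ks \<Longrightarrow> coord_frame ks i = coord_frame ls (\<pi> i)"
proof -
  define m where "m = length ks"
  have lm: "length ls = m" unfolding m_def using distinct_card[OF ks] distinct_card[OF ls] same by simp
  have bij: "bij_betw ((!) ls) {..<m} (set ks)" using bij_betw_nth[OF ls] lm same by simp
  define idx where "idx = inv_into {..<m} ((!) ls)"
  have idx: "idx x < m" "ls ! idx x = x" if "x \<in> set ks" for x
    unfolding idx_def using that bij_betw_inv_into[OF bij] bij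
    by (auto simp: bij_betw_def f_inv_into_f inv_into_into)
  have ks_in: "ks ! (i div 2) \<in> set ks" if "i < 2*m" for i using that unfolding m_def by simp
  define \<pi> where "\<pi> i = (if i < 2*m then 2 * idx (ks ! (i div 2)) + i mod 2 else i)" for i
  have \<pi>lt: "\<pi> i < 2*m" if "i < 2*m" for i
    using idx(1)[OF ks_in[OF that]] that unfolding \<pi>_def by simp
  have \<pi>inj: "inj_on \<pi> {..<2*m}"
  proof (rule inj_onI)
    fix a b assume a: "a \<in> {..<2*m}" and b: "b \<in> {..<2*m}" and e: "\<pi> a = \<pi> b"
    then have e2: "2 * idx (ks ! (a div 2)) + a mod 2 = 2 * idx (ks ! (b div 2)) + b mod 2"
      unfolding \<pi>_def by simp
    then have "a mod 2 = b mod 2" by presburger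
    with e2 have "idx (ks ! (a div 2)) = idx (ks ! (b div 2))" by simp
    then have "ks ! (a div 2) = ks ! (b div 2)" using idx(2) ks_in a b by (metis lessThan_iff)
    then have "a div 2 = b div 2" using a b ks unfolding m_def by (simp add: nth_eq_iff_index_eq)
    with \<open>a mod 2 = b mod 2\<close> show "a = b" by (metis div_mult_mod_eq)
  qed
  show thesis
  proof (rule that)
    show "\<pi> permutes {..<2 * length ks}" unfolding m_def[symmetric]
    proof (rule bij_imp_permutes)
      have "\<pi> ` {..<2*m} = {..<2*m}" by (rule endo_inj_surj) (use \<pi>lt \<pi>inj in auto)
      then show "bij_betw \<pi> {..<2*m} {..<2*m}" using \<pi>inj unfolding bij_betw_def by simp
    qed (simp add: \<pi>_def)
    fix i assume "i < 2 * length ks"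
    then have "\<pi> i div 2 = idx (ks ! (i div 2))" "even (\<pi> i) = even i" "ks ! (i div 2) \<in> set ks"
      unfolding \<pi>_def m_def by auto
    then show "coord_frame ks i = coord_frame ls (\<pi> i)" unfolding coord_frame_def using idx(2) by simp
  qed
qed

lemma std_vol_coord_frame_nonzero:
  assumes "distinct ks" "set ks = (UNIV :: 'm::finite set)"
  shows "std_vol (coord_frame ks) \<noteq> 0"
proof -
  define ls where "ls = (SOME l. distinct l \<and> set l = (UNIV :: 'm set))"
  have "\<exists>l. distinct l \<and> set l = (UNIV :: 'm set)" using finite_distinct_list[of "UNIV :: 'm set"] by auto
  then have ls: "distinct ls" "set ls = UNIV" unfolding ls_def by (metis (mono_tags, lifting) someI_ex)+
  have std_vol: "std_vol = wedge_list2 (map dxdy ls)" unfolding std_vol_def dxdy_def ls_def ..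
  have len: "length ls = length ks" using distinct_card[OF ls(1)] distinct_card[OF assms(1)] ls(2) assms(2) by simp
  obtain \<pi> where \<pi>: "\<pi> permutes {..<2 * length ks}"
    and frame: "\<And>i. i < 2 * length ks \<Longrightarrow> coord_frame ks i = coord_frame ls (\<pi> i)"
    using coord_frame_reorder[OF assms(1) ls(1)] assms(2) ls(2) by metis
  have "std_vol (coord_frame ks) = wedge_list2 (map dxdy ls) (\<lambda>i. coord_frame ls (\<pi> i))"
    unfolding std_vol by (rule form_arityD[OF form_arity_wedge_list2_dxdy]) (simp add: frame len)
  also have "\<dots> = of_int (sign \<pi>)"
    using alternatingD[OF alternating_wedge_list2_dxdy[of ls], of \<pi> "coord_frame ls"] \<pi> len
    by (simp add: wedge_list2_dxdy_coord_frame[OF ls(1)])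
  finally show ?thesis by (simp add: sign_def)
qed

definition coord_form :: "'m list \<Rightarrow> ('m::finite) cform" where
  "coord_form ds = wedge_list (map (\<lambda>k. one_form (\<lambda>x. x $ k)) ds)"

lemma form_arity_coord_form: "form_arity (length ds) (coord_form ds)"
  unfolding coord_form_def by (rule form_arity_wedge_list) (rule form_arity_one_form)

lemma alternating_coord_form: "alternating (length ds) (coord_form ds)"
  unfolding coord_form_def using alternating_wedge_list[of "map (\<lambda>k. one_form (\<lambda>x. x $ k)) ds"] by simp

lemma vanishes_on_coord_form: "vanishes_on (length ds) {v. \<forall>k\<in>set ds. v $ k = 0} (coord_form ds)"
  unfolding coord_form_def by (rule vanishes_on_wedge_list, rule vanishes_on_one_form) auto

lemma decomposable_coord_form: "decomposable_k0 (length ds) (coord_form ds)"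
  unfolding decomposable_k0_def
proof (intro exI[of _ "\<lambda>l j. if j = ds ! l then 1 else 0"])
  have "(\<lambda>v. \<Sum>j\<in>UNIV. (if j = ds ! l then 1 else 0) * v 0 $ j) = one_form (\<lambda>x. x $ (ds ! l))" for l
  proof
    fix v :: "nat \<Rightarrow> complex^'a"
    have "(\<Sum>j\<in>UNIV. (if j = ds ! l then 1 else 0) * v 0 $ j) = (\<Sum>j\<in>UNIV. if j = ds ! l then v 0 $ j else 0)"
      by (intro sum.cong) auto
    then show "(\<Sum>j\<in>UNIV. (if j = ds ! l then 1 else 0) * v 0 $ j) = one_form (\<lambda>x. x $ (ds ! l)) v"
      by (simp add: one_form_def)
  qed
  then have "map (\<lambda>l v. \<Sum>j\<in>UNIV. (if j = ds ! l then 1 else 0) * v 0 $ j) [0..<length ds]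
      = map (\<lambda>k. one_form (\<lambda>x. x $ k)) (map ((!) ds) [0..<length ds])"
    by simp
  then show "coord_form ds = wedge_list (map (\<lambda>l v. \<Sum>j\<in>UNIV. (if j = ds ! l then 1 else 0) * v 0 $ j) [0..<length ds])"
    unfolding coord_form_def by (simp add: map_nth)
qed

lemma coord_form_axes: "distinct ds \<Longrightarrow> coord_form ds (\<lambda>i. axis (ds ! i) 1) = 1"
proof (induction ds)
  case Nil then show ?case by (simp add: coord_form_def)
next
  case (Cons k ds)
  have "axis ((k # ds) ! (1+i)) 1 \<in> {v. v $ k = 0}" if "i < length ds" for i
    using Cons.prems that by (auto simp: axis_def)
  then have "wedge 1 (length ds) (one_form (\<lambda>x. x $ k)) (coord_form ds) (\<lambda>i. axis ((k # ds) ! i) 1)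
      = one_form (\<lambda>x. x $ k) (\<lambda>i. axis ((k # ds) ! i) 1) * coord_form ds (\<lambda>i. axis ((k # ds) ! (1+i)) 1)"
    by (intro wedge_eq_mult_if_vanishes_on_left[OF form_arity_one_form alternating_one_form
          form_arity_coord_form alternating_coord_form vanishes_on_one_form[where Z="{v. v $ k = 0}"]]) auto
  then show ?case using Cons by (simp add: coord_form_def one_form_def)
qed

subsection \<open>Transversality on a coordinate frame\<close>

text \<open>Transversality is tested with the coordinate form of the complementary coordinates; on the
  coordinate frame the wedge product then splits into the coefficient of the covector times a
  constant.\<close>

lemma transverse_coord_frame_factor:
  fixes kl :: "'m::finite list"
  assumes kl: "distinct kl" "set kl = UNIV" and p: "p < CARD('m)"
  obtains A where "\<And>\<Omega>. is_pp_covector p \<Omega> \<Longrightarrow> transverse p \<Omega> \<Longrightarrow>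
    \<exists>t>0. \<Omega> (coord_frame kl) * A = complex_of_real t * std_vol (coord_frame kl)"
proof -
  define q where "q = CARD('m) - p"
  define ds where "ds = drop p kl"
  define Z where "Z = {v :: complex^'m. \<forall>k\<in>set ds. v $ k = 0}"
  define \<psi> where "\<psi> = coord_form ds"
  define \<eta> where "\<eta> = (\<lambda>v. sigma_const q * wedge q q \<psi> (cnj_form \<psi>) v)"
  have len: "length kl = CARD('m)" using distinct_card[OF kl(1)] kl(2) by simp
  have lds: "length ds = q" using len by (simp add: ds_def q_def)
  have "decomposable_k0 q \<psi>" unfolding \<psi>_def lds[symmetric] by (rule decomposable_coord_form)
  moreover have "\<psi> \<noteq> (\<lambda>v. 0)"
    using coord_form_axes[of ds] kl(1) unfolding \<psi>_def ds_def by (metis distinct_drop zero_neq_one)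
  ultimately have wedge_vol: "\<exists>t>0. wedge (2*p) (2*q) \<Omega> \<eta> = (\<lambda>v. complex_of_real t * std_vol v)"
    if "transverse p \<Omega>" for \<Omega> :: "'m cform"
    using that unfolding transverse_def Let_def q_def[symmetric] \<eta>_def by blast
  have \<psi>: "form_arity q \<psi>" "vanishes_on q Z \<psi>"
    unfolding \<psi>_def Z_def lds[symmetric] by (rule form_arity_coord_form vanishes_on_coord_form)+
  have \<eta>: "form_arity (2*q) \<eta>" "alternating (2*q) \<eta>" "vanishes_on (2*q) Z \<eta>"
    unfolding \<eta>_def mult_2
    by (intro form_arity_scale alternating_scale vanishes_on_scale form_arity_wedge alternating_wedge
          vanishes_on_wedge form_arity_cnj_form vanishes_on_cnj_form \<psi>)+
  have frame_Z: "coord_frame kl i \<in> Z" if "i < 2*p" for i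
  proof -
    have "i div 2 < length (take p kl)" using that p len by simp
    then have "kl ! (i div 2) \<in> set (take p kl)" by (metis nth_mem nth_take length_take min_less_iff_conj)
    then have "kl ! (i div 2) \<notin> set ds"
      unfolding ds_def using set_take_disj_set_drop_if_distinct[OF kl(1), of p p] by auto
    then show ?thesis unfolding coord_frame_def Z_def axis_def by auto
  qed
  show thesis
  proof (rule that[of "\<eta> (\<lambda>i. coord_frame kl (2*p + i))"])
    fix \<Omega> :: "'m cform" assume \<Omega>: "is_pp_covector p \<Omega>" "transverse p \<Omega>"
    have "wedge (2*p) (2*q) \<Omega> \<eta> (coord_frame kl) = \<Omega> (coord_frame kl) * \<eta> (\<lambda>i. coord_frame kl (2*p + i))"
      by (rule wedge_eq_mult_if_vanishes_on_right[OF form_arity_pp_covector[OF \<Omega>(1)]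
            alternating_pp_covector[OF \<Omega>(1)] \<eta> frame_Z])
    then show "\<exists>t>0. \<Omega> (coord_frame kl) * \<eta> (\<lambda>i. coord_frame kl (2*p + i)) = complex_of_real t * std_vol (coord_frame kl)"
      using wedge_vol[OF \<Omega>(2)] by force
  qed
qed

lemma transverse_coord_frame_ray:
  fixes kl :: "'m::finite list"
  assumes kl: "distinct kl" "set kl = UNIV" and p: "p < CARD('m)"
  obtains r where "r \<noteq> 0"
    and "\<And>\<Omega>. is_pp_covector p \<Omega> \<Longrightarrow> transverse p \<Omega> \<Longrightarrow> \<exists>t>0. \<Omega> (coord_frame kl) = complex_of_real t * r"
proof -
  obtain A where factor: "\<And>\<Omega>. is_pp_covector p \<Omega> \<Longrightarrow> transverse p \<Omega> \<Longrightarrow>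
    \<exists>t>0. \<Omega> (coord_frame kl) * A = complex_of_real t * std_vol (coord_frame kl)"
    using transverse_coord_frame_factor[OF kl p] by blast
  define B where "B = std_vol (coord_frame kl)"
  have B: "B \<noteq> 0" unfolding B_def by (rule std_vol_coord_frame_nonzero[OF kl])
  show thesis
  proof (cases "A = 0")
    case True
    \<comment> \<open>then there is no transverse (p,p)-covector at all\<close>
    have "\<not> (is_pp_covector p \<Omega> \<and> transverse p \<Omega>)" for \<Omega> :: "'m cform"
      using factor[of \<Omega>] True B unfolding B_def by auto
    then show ?thesis by (intro that[of 1]) auto
  next
    case False
    show ?thesis
    proof (rule that[of "B / A"])
      show "B / A \<noteq> 0" using False B by simp
      fix \<Omega> :: "'m cform" assume "is_pp_covector p \<Omega>" "transverse p \<Omega>"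
      then obtain t where "t > 0" "\<Omega> (coord_frame kl) * A = complex_of_real t * B"
        using factor unfolding B_def by blast
      then show "\<exists>t>0. \<Omega> (coord_frame kl) = complex_of_real t * (B / A)"
        using False by (auto simp: field_simps)
    qed
  qed
qed

section \<open>Averages over lattice grids\<close>

text \<open>zvec P a b is the point (0, P a + i P b) of C x C^n; the lattice translations of the Nakamura
  group are the zvec P u u' with u, u' integral, and grid N indexes the points of mesh 1/N in the
  fundamental domain of this lattice.\<close>

definition zvec :: "real^'n^'n \<Rightarrow> real^'n \<Rightarrow> real^'n \<Rightarrow> complex^('n::finite option)" where
  "zvec P a b = (\<chi> k. case k of None \<Rightarrow> 0
      | Some i \<Rightarrow> complex_of_real ((P *v a) $ i) + \<i> * complex_of_real ((P *v b) $ i))"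

definition int_vec :: "nat \<Rightarrow> ('n::finite \<Rightarrow> int) \<Rightarrow> real^'n" where
  "int_vec N \<xi> = (\<chi> j. real_of_int (\<xi> j) / real N)"

definition grid :: "nat \<Rightarrow> (('n::finite \<Rightarrow> int) \<times> ('n \<Rightarrow> int)) set" where
  "grid N = (UNIV \<rightarrow>\<^sub>E {0..<int N}) \<times> (UNIV \<rightarrow>\<^sub>E {0..<int N})"

definition grid_point :: "real^'n^'n \<Rightarrow> nat \<Rightarrow> real \<Rightarrow> ('n \<Rightarrow> int) \<times> ('n \<Rightarrow> int) \<Rightarrow> complex^('n::finite option)" where
  "grid_point P N s \<iota> = s *\<^sub>R axis None 1 + zvec P (int_vec N (fst \<iota>)) (int_vec N (snd \<iota>))"

definition grid_mod :: "nat \<Rightarrow> ('n \<Rightarrow> int) \<times> ('n \<Rightarrow> int) \<Rightarrow> ('n \<Rightarrow> int) \<times> ('n \<Rightarrow> int)" where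
  "grid_mod N \<iota> = ((\<lambda>j. fst \<iota> j mod int N), (\<lambda>j. snd \<iota> j mod int N))"

definition lattice_periodic :: "real^'n^'n \<Rightarrow> (complex^('n::finite option) \<Rightarrow> 'b) \<Rightarrow> bool" where
  "lattice_periodic P F \<longleftrightarrow> (\<forall>x a b. F (x + zvec P (int_vec 1 a) (int_vec 1 b)) = F x)"

lemma zvec_add: "zvec P (a + a') (b + b') = zvec P a b + zvec P a' b'"
  unfolding zvec_def vec_eq_iff by (auto simp: matrix_vector_right_distrib algebra_simps split: option.splits)

lemma zvec_scaleR: "zvec P (c *\<^sub>R a) (c *\<^sub>R b) = c *\<^sub>R zvec P a b"
proof -
  have cs: "c *\<^sub>R z = complex_of_real c * z" for z :: complex by (simp add: scaleR_conv_of_real)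
  show ?thesis
    unfolding zvec_def vec_eq_iff
    by (auto simp: matrix_vector_mult_scaleR vector_scaleR_component cs algebra_simps split: option.splits)
qed

lemma finite_grid: "finite (grid N)"
  unfolding grid_def by (intro finite_cartesian_product finite_PiE) auto

lemma zero_in_grid: "N > 0 \<Longrightarrow> (\<lambda>_. 0, \<lambda>_. 0) \<in> grid N"
  unfolding grid_def by auto

lemma grid_mod_in_grid: "N > 0 \<Longrightarrow> grid_mod N \<iota> \<in> grid N"
  unfolding grid_mod_def grid_def by auto

lemma int_vec_mod_div:
  assumes "N > 0"
  shows "int_vec N \<xi> = int_vec N (\<lambda>j. \<xi> j mod int N) + int_vec 1 (\<lambda>j. \<xi> j div int N)"
proof -
  have "real_of_int (\<xi> j) / real N = real_of_int (\<xi> j mod int N) / real N + real_of_int (\<xi> j div int N)" for j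
  proof -
    have "real_of_int (\<xi> j) = real_of_int (\<xi> j div int N) * real N + real_of_int (\<xi> j mod int N)"
      by (metis div_mult_mod_eq of_int_add of_int_mult of_int_of_nat_eq)
    then show ?thesis using assms by (simp add: field_simps)
  qed
  then show ?thesis unfolding int_vec_def by vector
qed

lemma lattice_periodic_grid_mod:
  assumes "lattice_periodic P F" "N > 0"
  shows "F (grid_point P N s (grid_mod N \<iota>)) = F (grid_point P N s \<iota>)"
proof -
  obtain \<xi> \<eta> where \<iota>: "\<iota> = (\<xi>, \<eta>)" by (cases \<iota>)
  have "grid_point P N s \<iota> = grid_point P N s (grid_mod N \<iota>)
      + zvec P (int_vec 1 (\<lambda>j. \<xi> j div int N)) (int_vec 1 (\<lambda>j. \<eta> j div int N))"
    unfolding grid_point_def grid_mod_def \<iota>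
    using int_vec_mod_div[OF assms(2), of \<xi>] int_vec_mod_div[OF assms(2), of \<eta>]
    by (simp add: zvec_add add.assoc)
  then show ?thesis using assms(1) unfolding lattice_periodic_def by metis
qed

lemma sum_grid_reindex:
  fixes \<phi> :: "('n::finite \<Rightarrow> int) \<times> ('n \<Rightarrow> int) \<Rightarrow> ('n \<Rightarrow> int) \<times> ('n \<Rightarrow> int)"
  assumes "\<And>\<iota>. \<iota> \<in> grid N \<Longrightarrow> \<phi> \<iota> \<in> grid N" "inj_on \<phi> (grid N)"
  shows "(\<Sum>\<iota>\<in>grid N. G (\<phi> \<iota>)) = (\<Sum>\<iota>\<in>grid N. G \<iota>)"
proof -
  have "\<phi> ` grid N \<subseteq> grid N" using assms(1) by auto
  then have "\<phi> ` grid N = grid N" using endo_inj_surj[OF finite_grid, of \<phi> N] assms(2) by blast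
  then show ?thesis using sum.reindex[OF assms(2), of G] by simp
qed

lemma sum_grid_mod_reindex:
  fixes \<phi> :: "('n::finite \<Rightarrow> int) \<times> ('n \<Rightarrow> int) \<Rightarrow> ('n \<Rightarrow> int) \<times> ('n \<Rightarrow> int)"
  assumes per: "lattice_periodic P G" and N: "N > 0"
    and inj: "\<And>x y. x \<in> grid N \<Longrightarrow> y \<in> grid N \<Longrightarrow> grid_mod N (\<phi> x) = grid_mod N (\<phi> y) \<Longrightarrow> x = y"
  shows "(\<Sum>\<iota>\<in>grid N. G (grid_point P N s (\<phi> \<iota>))) = (\<Sum>\<iota>\<in>grid N. G (grid_point P N s \<iota>))"
proof -
  have "(\<Sum>\<iota>\<in>grid N. G (grid_point P N s (\<phi> \<iota>))) = (\<Sum>\<iota>\<in>grid N. G (grid_point P N s (grid_mod N (\<phi> \<iota>))))"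
    using lattice_periodic_grid_mod[OF per N] by simp
  also have "\<dots> = (\<Sum>\<iota>\<in>grid N. G (grid_point P N s \<iota>))"
    by (rule sum_grid_reindex[where \<phi>="\<lambda>\<iota>. grid_mod N (\<phi> \<iota>)"], rule grid_mod_in_grid[OF N], rule inj_onI, rule inj)
  finally show ?thesis .
qed

lemma dvd_diff_small_eq:
  fixes a b N :: int
  assumes "N dvd a - b" "\<bar>a - b\<bar> < N"
  shows "a = b"
proof (rule ccontr)
  assume "a \<noteq> b"
  then have "\<bar>N\<bar> \<le> \<bar>a - b\<bar>" using assms(1) by (intro dvd_imp_le_int) simp_all
  then show False using assms(2) by simp
qed

lemma grid_eq_if_congruent:
  assumes "\<xi> \<in> UNIV \<rightarrow>\<^sub>E {0..<int N}" "\<xi>' \<in> UNIV \<rightarrow>\<^sub>E {0..<int N}" "\<And>j. int N dvd \<xi> j - \<xi>' j"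
  shows "\<xi> = \<xi>'"
proof
  fix j
  have "0 \<le> \<xi> j" "\<xi> j < int N" "0 \<le> \<xi>' j" "\<xi>' j < int N" using assms(1,2) by (auto simp: PiE_iff)
  then have "\<bar>\<xi> j - \<xi>' j\<bar> < int N" by linarith
  then show "\<xi> j = \<xi>' j" using dvd_diff_small_eq assms(3) by blast
qed

definition grid_step :: "bool \<Rightarrow> 'n \<Rightarrow> ('n \<Rightarrow> int) \<times> ('n \<Rightarrow> int) \<Rightarrow> ('n \<Rightarrow> int) \<times> ('n \<Rightarrow> int)" where
  "grid_step t j \<iota> = (\<lambda>i. fst \<iota> i + of_bool (\<not> t \<and> i = j), \<lambda>i. snd \<iota> i + of_bool (t \<and> i = j))"

definition lattice_dir :: "real^'n^'n \<Rightarrow> bool \<Rightarrow> 'n \<Rightarrow> complex^('n::finite option)" where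
  "lattice_dir P t j = zvec P (if t then 0 else axis j 1) (if t then axis j 1 else 0)"

lemma lattice_dir_component:
  "lattice_dir P t j $ None = 0"
  "lattice_dir P t j $ Some i = (if t then \<i> else 1) * complex_of_real (P$i$j)"
  unfolding lattice_dir_def zvec_def by (simp_all add: matrix_vector_mult_basis column_def)

lemma grid_point_step:
  assumes "N > 0"
  shows "grid_point P N s (grid_step t j \<iota>) = grid_point P N s \<iota> + (1 / real N) *\<^sub>R lattice_dir P t j"
proof -
  have step: "int_vec N (\<lambda>i. \<xi> i + of_bool (i = j)) = int_vec N \<xi> + (1 / real N) *\<^sub>R axis j 1"
    for \<xi> :: "'a \<Rightarrow> int"
    unfolding int_vec_def by (vector axis_def) (auto simp: add_divide_distrib)
  have "(\<lambda>i. \<xi> i + of_bool False) = \<xi>" for \<xi> :: "'a \<Rightarrow> int" by simp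
  have "zvec P (a + c *\<^sub>R v) b = zvec P a b + c *\<^sub>R zvec P v 0"
    "zvec P a (b + c *\<^sub>R v) = zvec P a b + c *\<^sub>R zvec P 0 v" for a b v and c :: real
    using zvec_add[of P a "c *\<^sub>R v" b 0] zvec_add[of P a 0 b "c *\<^sub>R v"] zvec_scaleR[of P c v 0] zvec_scaleR[of P c 0 v]
    by simp_all
  then show ?thesis
    unfolding grid_point_def grid_step_def lattice_dir_def by (cases t) (simp_all add: step add.assoc)
qed

lemma sum_grid_translate:
  assumes "lattice_periodic P G" "N > 0"
  shows "(\<Sum>\<iota>\<in>grid N. G (grid_point P N s \<iota> + (1 / real N) *\<^sub>R lattice_dir P t j))
       = (\<Sum>\<iota>\<in>grid N. G (grid_point P N s \<iota>))"
proof -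
  have cong: "\<xi> = \<xi>'" if "\<xi> \<in> UNIV \<rightarrow>\<^sub>E {0..<int N}" "\<xi>' \<in> UNIV \<rightarrow>\<^sub>E {0..<int N}"
    "\<And>i. (\<xi> i + d i) mod int N = (\<xi>' i + d i) mod int N" for \<xi> \<xi>' d :: "'a \<Rightarrow> int"
    using that by (intro grid_eq_if_congruent) (auto simp: mod_eq_dvd_iff)
  have "x = y" if "x \<in> grid N" "y \<in> grid N" "grid_mod N (grid_step t j x) = grid_mod N (grid_step t j y)" for x y
  proof -
    have "fst (grid_mod N (grid_step t j x)) i = fst (grid_mod N (grid_step t j y)) i"
      "snd (grid_mod N (grid_step t j x)) i = snd (grid_mod N (grid_step t j y)) i" for i
      using that(3) by simp_all
    then have "fst x = fst y" "snd x = snd y"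
      using that(1,2) cong[of "fst x" "fst y" "\<lambda>i. of_bool (\<not> t \<and> i = j)"]
        cong[of "snd x" "snd y" "\<lambda>i. of_bool (t \<and> i = j)"]
      by (auto simp: grid_mod_def grid_step_def grid_def mem_Times_iff)
    then show ?thesis by (simp add: prod_eq_iff)
  qed
  then have "(\<Sum>\<iota>\<in>grid N. G (grid_point P N s (grid_step t j \<iota>))) = (\<Sum>\<iota>\<in>grid N. G (grid_point P N s \<iota>))"
    by (rule sum_grid_mod_reindex[OF assms])
  then show ?thesis by (simp add: grid_point_step[OF assms(2)])
qed

subsection \<open>The twist (w, z) \<mapsto> (w + 1, e^\<lambda> z)\<close>

definition int_mat_vec :: "int^'n^'n \<Rightarrow> ('n::finite \<Rightarrow> int) \<Rightarrow> ('n \<Rightarrow> int)" where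
  "int_mat_vec M \<xi> = (\<lambda>i. \<Sum>j\<in>UNIV. M$i$j * \<xi> j)"

lemma det_map_matrix_of_int: "det (map_matrix of_int A) = (of_int (det A) :: 'a::comm_ring_1)"
  unfolding det_def by (simp add: of_int_sum of_int_prod)

lemma map_matrix_mult_int_vec: "map_matrix real_of_int M *v int_vec N \<xi> = int_vec N (int_mat_vec M \<xi>)"
  unfolding int_vec_def int_mat_vec_def matrix_vector_mult_def map_matrix_def
  by (vector of_int_sum sum_divide_distrib)

text \<open>Cramer's rule: for an integer matrix of determinant 1, d k is the determinant of an integer
  matrix one of whose columns is M d.\<close>

lemma dvd_if_dvd_int_mat_vec:
  fixes M :: "int^'n::finite^'n" and d :: "'n \<Rightarrow> int"
  assumes "det M = 1" "\<And>i. N dvd int_mat_vec M d i"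
  shows "N dvd d k"
proof -
  define B where "B = (\<chi> i j. if j = k then int_mat_vec M d i else M$i$j)"
  define x where "x = (\<chi> j. real_of_int (d j))"
  have "map_matrix real_of_int M *v x = (\<chi> i. real_of_int (int_mat_vec M d i))"
    unfolding x_def int_mat_vec_def matrix_vector_mult_def map_matrix_def by (vector of_int_sum)
  then have "(\<chi> i j. if j = k then (map_matrix real_of_int M *v x)$i else map_matrix real_of_int M$i$j) = map_matrix real_of_int B"
    unfolding B_def by (vector map_matrix_def)
  then have "det (map_matrix real_of_int B) = x$k * det (map_matrix real_of_int M)"
    using cramer_lemma[where A="map_matrix real_of_int M" and x=x and k=k] by simp
  then have "d k = det B" unfolding det_map_matrix_of_int assms(1) x_def by simp
  also have "N dvd det B"
    unfolding det_def
  proof (rule dvd_sum)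
    fix p assume "p \<in> {p. p permutes (UNIV :: 'n set)}"
    then have p: "p permutes UNIV" by simp
    define i0 where "i0 = inv p k"
    have "p i0 = k" unfolding i0_def using permutes_inverses(1)[OF p] by simp
    then have "N dvd B $ i0 $ p i0" unfolding B_def using assms(2) by simp
    also have "B $ i0 $ p i0 dvd (\<Prod>i\<in>UNIV. B $ i $ p i)" by (rule dvd_prodI) auto
    finally show "N dvd of_int (sign p) * (\<Prod>i\<in>UNIV. B $ i $ p i)" by simp
  qed
  finally show ?thesis .
qed

lemma diagonalized_mult_apply:
  fixes P A :: "real^'n::finite^'n" and lam :: "'n \<Rightarrow> real"
  assumes "invertible P" "P ** A ** matrix_inv P = (\<chi> i j. if i = j then exp (lam i) else 0)"
  shows "(P *v (A *v a)) $ i = exp (lam i) * (P *v a) $ i"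
proof -
  define D :: "real^'n^'n" where "D = (\<chi> i j. if i = j then exp (lam i) else 0)"
  have "matrix_inv P ** P = mat 1"
    using assms(1) unfolding matrix_inv_def invertible_def by (rule someI2_ex) simp
  then have "P ** A = (P ** A ** matrix_inv P) ** P" by (metis matrix_mul_assoc matrix_mul_rid)
  then have "P *v (A *v a) = D *v (P *v a)" using assms(2) unfolding D_def by (simp add: matrix_vector_mul_assoc)
  also have "(D *v (P *v a)) $ i = exp (lam i) * (P *v a) $ i"
    unfolding D_def matrix_vector_mult_def by (simp add: if_distrib[of "\<lambda>x. x * _"] cong: if_cong)
  finally show ?thesis .
qed

lemma nak_ltrans_grid_point:
  assumes eig: "\<And>a i. (P *v (map_matrix real_of_int M *v a)) $ i = exp (lam i) * (P *v a) $ i"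
  shows "nak_ltrans lam (1, 0) (grid_point P N 0 \<iota>) = grid_point P N 1 (int_mat_vec M (fst \<iota>), int_mat_vec M (snd \<iota>))"
proof -
  have "complex_of_real (exp (lam i)) * complex_of_real ((P *v a) $ i)
      = complex_of_real ((P *v (map_matrix real_of_int M *v a)) $ i)" for i a
    by (simp add: eig)
  then show ?thesis
    unfolding nak_ltrans_def grid_point_def zvec_def vec_eq_iff
    by (auto simp: map_matrix_mult_int_vec[symmetric] algebra_simps axis_def split: option.splits)
qed

lemma sum_grid_twist:
  assumes per: "lattice_periodic P G" and N: "N > 0" and det: "det M = 1"
    and eig: "\<And>a i. (P *v (map_matrix real_of_int M *v a)) $ i = exp (lam i) * (P *v a) $ i"
  shows "(\<Sum>\<iota>\<in>grid N. G (nak_ltrans lam (1, 0) (grid_point P N 0 \<iota>))) = (\<Sum>\<iota>\<in>grid N. G (grid_point P N 1 \<iota>))"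
proof -
  have cong: "\<xi> = \<xi>'" if "\<xi> \<in> UNIV \<rightarrow>\<^sub>E {0..<int N}" "\<xi>' \<in> UNIV \<rightarrow>\<^sub>E {0..<int N}"
    "\<And>i. int_mat_vec M \<xi> i mod int N = int_mat_vec M \<xi>' i mod int N" for \<xi> \<xi>'
  proof (rule grid_eq_if_congruent[OF that(1,2)])
    fix j
    have "int_mat_vec M \<xi> i - int_mat_vec M \<xi>' i = int_mat_vec M (\<lambda>j. \<xi> j - \<xi>' j) i" for i
      unfolding int_mat_vec_def by (simp add: sum_subtractf algebra_simps)
    then have "int N dvd int_mat_vec M (\<lambda>j. \<xi> j - \<xi>' j) i" for i
      using that(3)[of i] by (metis mod_eq_dvd_iff)
    then show "int N dvd \<xi> j - \<xi>' j" by (rule dvd_if_dvd_int_mat_vec[OF det])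
  qed
  have "x = y" if "x \<in> grid N" "y \<in> grid N"
    "grid_mod N (int_mat_vec M (fst x), int_mat_vec M (snd x)) = grid_mod N (int_mat_vec M (fst y), int_mat_vec M (snd y))"
    for x y
  proof -
    have "fst x = fst y" "snd x = snd y"
      using that cong[of "fst x" "fst y"] cong[of "snd x" "snd y"]
      by (auto simp: grid_mod_def grid_def mem_Times_iff fun_eq_iff)
    then show ?thesis by (simp add: prod_eq_iff)
  qed
  then have "(\<Sum>\<iota>\<in>grid N. G (grid_point P N 1 (int_mat_vec M (fst \<iota>), int_mat_vec M (snd \<iota>))))
      = (\<Sum>\<iota>\<in>grid N. G (grid_point P N 1 \<iota>))"
    by (rule sum_grid_mod_reindex[OF per N])
  then show ?thesis by (simp add: nak_ltrans_grid_point[OF eig])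
qed

definition box_param :: "real^'n^'n \<Rightarrow> real \<times> (real^'n) \<times> (real^'n) \<Rightarrow> complex^('n::finite option)" where
  "box_param P z = fst z *\<^sub>R axis None 1 + zvec P (fst (snd z)) (snd (snd z))"

definition lattice_box :: "real^'n^'n \<Rightarrow> (complex^('n::finite option)) set" where
  "lattice_box P = box_param P ` ({0..1} \<times> cbox 0 (\<chi> i. 2) \<times> cbox 0 (\<chi> i. 2))"

lemma linear_box_param: "linear (box_param P)"
proof (rule linearI)
  fix x y :: "real \<times> (real^'a) \<times> (real^'a)"
  show "box_param P (x + y) = box_param P x + box_param P y"
    unfolding box_param_def by (simp add: zvec_add scaleR_add_left algebra_simps)
  fix c :: real
  show "box_param P (c *\<^sub>R x) = c *\<^sub>R box_param P x"
    unfolding box_param_def by (simp add: zvec_scaleR scaleR_add_right)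
qed

lemma compact_lattice_box: "compact (lattice_box P)"
  unfolding lattice_box_def
  by (rule compact_continuous_image[OF linear_continuous_on_compose[OF continuous_on_id linear_box_param, simplified]])
     (intro compact_Times compact_cbox compact_Icc)

lemma grid_point_line_in_lattice_box:
  assumes \<iota>: "\<iota> \<in> grid N" and N: "N > 0" and s: "s \<in> {0..1}" and \<tau>: "0 \<le> \<tau>" "\<tau> \<le> 1"
  shows "grid_point P N s \<iota> + \<tau> *\<^sub>R lattice_dir P t j \<in> lattice_box P"
proof -
  define a where "a = int_vec N (fst \<iota>) + \<tau> *\<^sub>R (if t then 0 else axis j 1)"
  define b where "b = int_vec N (snd \<iota>) + \<tau> *\<^sub>R (if t then axis j 1 else 0)"
  have eq: "grid_point P N s \<iota> + \<tau> *\<^sub>R lattice_dir P t j = box_param P (s, a, b)"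
    unfolding grid_point_def box_param_def lattice_dir_def a_def b_def
    by (simp add: zvec_add zvec_scaleR[symmetric] add.assoc)
  have "0 \<le> fst \<iota> i" "fst \<iota> i < int N" "0 \<le> snd \<iota> i" "snd \<iota> i < int N" for i
    using \<iota> unfolding grid_def by (auto simp: PiE_iff mem_Times_iff)
  then have "real_of_int (fst \<iota> i) \<le> real N" "real_of_int (snd \<iota> i) \<le> real N"
    "0 \<le> fst \<iota> i" "0 \<le> snd \<iota> i" for i
    by (metis of_int_less_iff of_int_of_nat_eq less_imp_le)+
  then have unit: "0 \<le> int_vec N (fst \<iota>) $ i \<and> int_vec N (fst \<iota>) $ i \<le> 1 \<and> 0 \<le> int_vec N (snd \<iota>) $ i \<and> int_vec N (snd \<iota>) $ i \<le> 1"
    for i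
    using N unfolding int_vec_def by (simp add: divide_le_eq_1)
  have "0 \<le> a $ i \<and> a $ i \<le> 2 \<and> 0 \<le> b $ i \<and> b $ i \<le> 2" for i
    using unit[of i] \<tau> by (cases t; cases "i = j") (simp_all add: a_def b_def axis_def)
  then have "a \<in> cbox 0 (\<chi> i. 2)" "b \<in> cbox 0 (\<chi> i. 2)" unfolding mem_box_cart by auto
  then show ?thesis using s unfolding eq lattice_box_def by (intro imageI) auto
qed

lemma grid_point_in_lattice_box: "\<iota> \<in> grid N \<Longrightarrow> N > 0 \<Longrightarrow> s \<in> {0..1} \<Longrightarrow> grid_point P N s \<iota> \<in> lattice_box P"
  using grid_point_line_in_lattice_box[of \<iota> N s 0 P] by simp

lemma has_vector_derivative_along_line:
  assumes "G differentiable (at (x + \<tau> *\<^sub>R b))"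
  shows "((\<lambda>\<tau>. G (x + \<tau> *\<^sub>R b)) has_vector_derivative frechet_derivative G (at (x + \<tau> *\<^sub>R b)) b) (at \<tau> within S)"
proof -
  let ?D = "frechet_derivative G (at (x + \<tau> *\<^sub>R b))"
  have dG: "(G has_derivative ?D) (at (x + \<tau> *\<^sub>R b))" using assms frechet_derivative_works by blast
  have "((\<lambda>\<tau>. x + \<tau> *\<^sub>R b) has_derivative (\<lambda>h. h *\<^sub>R b)) (at \<tau>)"
    by (auto intro!: derivative_eq_intros)
  then have "((G \<circ> (\<lambda>\<tau>. x + \<tau> *\<^sub>R b)) has_derivative (?D \<circ> (\<lambda>h. h *\<^sub>R b))) (at \<tau>)"
    by (rule diff_chain_at) (use dG in simp)
  moreover have "?D \<circ> (\<lambda>h. h *\<^sub>R b) = (\<lambda>h. h *\<^sub>R ?D b)"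
    using linear_cmul[OF has_derivative_linear[OF dG]] by (auto simp: fun_eq_iff)
  ultimately have "((\<lambda>\<tau>. G (x + \<tau> *\<^sub>R b)) has_vector_derivative ?D b) (at \<tau>)"
    unfolding has_vector_derivative_def by (simp add: o_def)
  then show ?thesis by (rule has_vector_derivative_at_within)
qed

lemma linearisation_along_segment:
  fixes G :: "'a::real_normed_vector \<Rightarrow> 'b::real_normed_vector"
  assumes diff: "\<And>x. G differentiable (at x)"
    and close: "\<And>\<tau>. \<tau> \<in> {0..h} \<Longrightarrow>
      norm (frechet_derivative G (at (x + \<tau> *\<^sub>R b)) b - frechet_derivative G (at x) b) \<le> \<epsilon>"
    and h: "0 \<le> h"
  shows "norm (G (x + h *\<^sub>R b) - G x - h *\<^sub>R frechet_derivative G (at x) b) \<le> h * \<epsilon>"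
proof -
  have "norm ((\<lambda>\<tau>. G (x + \<tau> *\<^sub>R b)) h - (\<lambda>\<tau>. G (x + \<tau> *\<^sub>R b)) 0
      - (h - 0) *\<^sub>R frechet_derivative G (at (x + 0 *\<^sub>R b)) b) \<le> norm (h - 0) * \<epsilon>"
  proof (rule vector_differentiable_bound_linearization)
    show "((\<lambda>\<tau>. G (x + \<tau> *\<^sub>R b)) has_vector_derivative frechet_derivative G (at (x + \<tau> *\<^sub>R b)) b) (at \<tau> within {0..h})"
      for \<tau> by (rule has_vector_derivative_along_line[OF diff])
    show "closed_segment 0 h \<subseteq> {0..h}" using h by (simp add: closed_segment_eq_real_ivl)
  qed (use close h in simp_all)
  then show ?thesis using h by simp
qed

text \<open>The grid sum of a derivative of a periodic function in a lattice direction is o(card (grid N)):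
  up to the error of the linearisation, which is small by uniform continuity, it is the telescoping
  sum of the differences along one grid step, which vanishes by periodicity.\<close>

lemma grid_sum_derivative_small:
  fixes G :: "complex^('n::finite option) \<Rightarrow> complex"
  assumes diff: "\<And>x. G differentiable (at x)"
    and cont: "continuous_on UNIV (\<lambda>x. frechet_derivative G (at x) (lattice_dir P t j))"
    and per: "lattice_periodic P G" and e: "\<epsilon> > 0"
  shows "\<forall>\<^sub>F N in sequentially. \<forall>s\<in>{0..1}.
           norm (\<Sum>\<iota>\<in>grid N. frechet_derivative G (at (grid_point P N s \<iota>)) (lattice_dir P t j))
             \<le> \<epsilon> * real (card (grid N :: (('n \<Rightarrow> int) \<times> ('n \<Rightarrow> int)) set))"
proof -
  define b where "b = lattice_dir P t j"
  define g where "g x = frechet_derivative G (at x) b" for x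
  have "uniformly_continuous_on (lattice_box P) g"
    unfolding g_def b_def by (rule compact_uniformly_continuous[OF continuous_on_subset[OF cont] compact_lattice_box]) simp
  then obtain \<delta> where \<delta>: "\<delta> > 0" "\<And>x y. x \<in> lattice_box P \<Longrightarrow> y \<in> lattice_box P \<Longrightarrow> dist y x < \<delta> \<Longrightarrow> dist (g y) (g x) < \<epsilon>"
    unfolding uniformly_continuous_on_def using e by metis
  obtain N0 :: nat where N0: "norm b / \<delta> < real N0" using reals_Archimedean2 by blast
  show ?thesis unfolding eventually_sequentially
  proof (intro exI[of _ "N0 + 1"] allI impI ballI)
    fix N :: nat and s :: real assume NN: "N0 + 1 \<le> N" and s: "s \<in> {0..1}"
    have N: "N > 0" using NN by simp
    have "norm b / \<delta> < real N" using N0 NN by linarith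
    then have Nd: "norm b / real N < \<delta>" using \<delta>(1) N by (simp add: divide_less_eq mult.commute)
    have linearisation: "norm (G (grid_point P N s \<iota> + (1 / real N) *\<^sub>R b) - G (grid_point P N s \<iota>)
        - (1 / real N) *\<^sub>R g (grid_point P N s \<iota>)) \<le> (1 / real N) * \<epsilon>" if \<iota>: "\<iota> \<in> grid N" for \<iota>
      unfolding g_def
    proof (rule linearisation_along_segment[OF diff])
      fix \<tau> assume \<tau>: "\<tau> \<in> {0..1 / real N}"
      let ?x = "grid_point P N s \<iota>"
      have in_box: "?x + \<tau> *\<^sub>R b \<in> lattice_box P" "?x \<in> lattice_box P"
        using \<tau> N grid_point_line_in_lattice_box[OF \<iota> N s, of \<tau> P t j] grid_point_in_lattice_box[OF \<iota> N s]
        unfolding b_def by (simp_all add: order_trans[of _ "1 / real N" 1])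
      have "dist (?x + \<tau> *\<^sub>R b) ?x \<le> norm b / real N"
        using \<tau> mult_right_mono[of \<tau> "1 / real N" "norm b"] by (simp add: dist_norm)
      then have "dist (g (?x + \<tau> *\<^sub>R b)) (g ?x) < \<epsilon>" using \<delta>(2)[OF in_box(2,1)] Nd by simp
      then show "norm (frechet_derivative G (at (?x + \<tau> *\<^sub>R b)) b - frechet_derivative G (at ?x) b) \<le> \<epsilon>"
        by (simp add: g_def dist_norm)
    qed simp
    have telescope: "(\<Sum>\<iota>\<in>grid N. G (grid_point P N s \<iota> + (1 / real N) *\<^sub>R b) - G (grid_point P N s \<iota>)) = 0"
      unfolding sum_subtractf b_def using sum_grid_translate[OF per N] by simp
    have "(1 / real N) * norm (\<Sum>\<iota>\<in>grid N. g (grid_point P N s \<iota>))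
        = norm (\<Sum>\<iota>\<in>grid N. G (grid_point P N s \<iota> + (1 / real N) *\<^sub>R b) - G (grid_point P N s \<iota>)
                  - (1 / real N) *\<^sub>R g (grid_point P N s \<iota>))"
      using telescope by (simp add: sum_subtractf scaleR_sum_right[symmetric])
    also have "\<dots> \<le> (\<Sum>\<iota>\<in>grid N. norm (G (grid_point P N s \<iota> + (1 / real N) *\<^sub>R b) - G (grid_point P N s \<iota>)
                  - (1 / real N) *\<^sub>R g (grid_point P N s \<iota>)))"
      by (rule norm_sum)
    also have "\<dots> \<le> (\<Sum>\<iota>\<in>(grid N :: (('n \<Rightarrow> int) \<times> ('n \<Rightarrow> int)) set). (1 / real N) * \<epsilon>)"
      by (intro sum_mono linearisation)
    finally show "norm (\<Sum>\<iota>\<in>grid N. frechet_derivative G (at (grid_point P N s \<iota>)) (lattice_dir P t j))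
        \<le> \<epsilon> * real (card (grid N :: (('n \<Rightarrow> int) \<times> ('n \<Rightarrow> int)) set))"
      using N unfolding g_def b_def by (simp add: field_simps)
  qed
qed

lemma grid_sum_lower_bound:
  fixes h :: "complex^('n::finite option) \<Rightarrow> complex" and P :: "real^'n^'n"
  assumes cont: "continuous_on UNIV h" and r: "r \<noteq> 0" and ray: "\<And>x. \<exists>t>0. h x = complex_of_real t * r"
  obtains m where "m > 0" "\<And>N. N > 0 \<Longrightarrow> norm r * m * real (card (grid N :: (('n \<Rightarrow> int) \<times> ('n \<Rightarrow> int)) set))
                     \<le> norm (\<Sum>\<iota>\<in>grid N. h (grid_point P N 0 \<iota>))"
proof -
  define f where "f x = Re (h x / r)" for x
  have f: "f x > 0 \<and> h x = complex_of_real (f x) * r" for x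
  proof -
    obtain t where "t > 0" "h x = complex_of_real t * r" using ray by blast
    moreover from this have "f x = t" unfolding f_def using r by simp
    ultimately show ?thesis by simp
  qed
  have cont_f: "continuous_on (lattice_box P) f"
    unfolding f_def by (intro continuous_intros continuous_on_subset[OF cont]) (use r in auto)
  have "lattice_box P \<noteq> {}"
    using grid_point_in_lattice_box[OF zero_in_grid, of 1 0 P] by auto
  then obtain m where m: "m \<in> f ` lattice_box P" "\<And>y. y \<in> f ` lattice_box P \<Longrightarrow> m \<le> y"
    using compact_attains_inf[OF compact_continuous_image[OF cont_f compact_lattice_box]] by auto
  show thesis
  proof (rule that)
    show "m > 0" using m(1) f by auto
    fix N :: nat assume N: "N > 0"
    have "(\<Sum>\<iota>\<in>grid N. h (grid_point P N 0 \<iota>)) = complex_of_real (\<Sum>\<iota>\<in>grid N. f (grid_point P N 0 \<iota>)) * r"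
      using f by (simp add: sum_distrib_right)
    then have sum_h: "norm (\<Sum>\<iota>\<in>grid N. h (grid_point P N 0 \<iota>)) = \<bar>\<Sum>\<iota>\<in>grid N. f (grid_point P N 0 \<iota>)\<bar> * norm r"
      by (simp only: norm_mult norm_of_real)
    have "(\<Sum>\<iota>\<in>(grid N :: (('n \<Rightarrow> int) \<times> ('n \<Rightarrow> int)) set). m) \<le> (\<Sum>\<iota>\<in>grid N. f (grid_point P N 0 \<iota>))"
      using m(2) grid_point_in_lattice_box[OF _ N, of _ 0 P] by (intro sum_mono) auto
    then have card_le: "real (card (grid N :: (('n \<Rightarrow> int) \<times> ('n \<Rightarrow> int)) set)) * m \<le> \<bar>\<Sum>\<iota>\<in>grid N. f (grid_point P N 0 \<iota>)\<bar>"
      using abs_ge_self[of "\<Sum>\<iota>\<in>grid N. f (grid_point P N 0 \<iota>)"] by simp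
    show "norm r * m * real (card (grid N :: (('n \<Rightarrow> int) \<times> ('n \<Rightarrow> int)) set))
        \<le> norm (\<Sum>\<iota>\<in>grid N. h (grid_point P N 0 \<iota>))"
      using mult_right_mono[OF card_le norm_ge_zero[of r]] unfolding sum_h by (simp add: mult_ac)
  qed
qed

lemma z_direction_decomposition:
  fixes P :: "real^'n::finite^'n" and u :: "complex^('n option)"
  assumes "invertible P" "u $ None = 0"
  defines "a \<equiv> matrix_inv P *v (\<chi> k. Re (u $ Some k))" and "b \<equiv> matrix_inv P *v (\<chi> k. Im (u $ Some k))"
  shows "u = (\<Sum>j\<in>UNIV. a $ j *\<^sub>R lattice_dir P False j + b $ j *\<^sub>R lattice_dir P True j)"
proof -
  have "P ** matrix_inv P = mat 1"
    using assms(1) unfolding matrix_inv_def invertible_def by (rule someI2_ex) simp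
  then have "P *v a = (\<chi> k. Re (u $ Some k))" "P *v b = (\<chi> k. Im (u $ Some k))"
    unfolding a_def b_def by (simp_all add: matrix_vector_mul_assoc)
  then have Pab: "(\<Sum>j\<in>UNIV. P$i$j * a$j) = Re (u $ Some i)" "(\<Sum>j\<in>UNIV. P$i$j * b$j) = Im (u $ Some i)" for i
    unfolding matrix_vector_mult_def by (simp_all add: vec_eq_iff)
  have cs: "c *\<^sub>R z = complex_of_real c * z" for c and z :: complex by (simp add: scaleR_conv_of_real)
  show ?thesis
  proof (rule vec_eq_iff[THEN iffD2], intro allI)
    fix k :: "'n option"
    show "u $ k = (\<Sum>j\<in>UNIV. a $ j *\<^sub>R lattice_dir P False j + b $ j *\<^sub>R lattice_dir P True j) $ k"
    proof (cases k)
      case None then show ?thesis using assms(2) by (simp add: sum_component lattice_dir_component)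
    next
      case (Some i)
      have "(\<Sum>j\<in>UNIV. a $ j *\<^sub>R lattice_dir P False j + b $ j *\<^sub>R lattice_dir P True j) $ k
          = complex_of_real (\<Sum>j\<in>UNIV. P$i$j * a$j) + \<i> * complex_of_real (\<Sum>j\<in>UNIV. P$i$j * b$j)"
        unfolding Some
        by (simp add: sum_component lattice_dir_component cs algebra_simps sum.distrib sum_distrib_left)
      also have "\<dots> = u $ k" unfolding Pab Some by (simp add: complex_eq[symmetric])
      finally show ?thesis by simp
    qed
  qed
qed

lemma grid_sum_derivative_small_z:
  fixes G :: "complex^('n::finite option) \<Rightarrow> complex" and P :: "real^'n^'n"
  assumes invP: "invertible P" and diff: "\<And>x. G differentiable (at x)"
    and cont: "\<And>v. continuous_on UNIV (\<lambda>x. frechet_derivative G (at x) v)"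
    and per: "lattice_periodic P G" and u: "u $ None = 0" and e: "\<epsilon> > 0"
  shows "\<forall>\<^sub>F N in sequentially. \<forall>s\<in>{0..1}.
           norm (\<Sum>\<iota>\<in>grid N. frechet_derivative G (at (grid_point P N s \<iota>)) u)
             \<le> \<epsilon> * real (card (grid N :: (('n \<Rightarrow> int) \<times> ('n \<Rightarrow> int)) set))"
proof -
  define a where "a = matrix_inv P *v (\<chi> k. Re (u $ Some k))"
  define b where "b = matrix_inv P *v (\<chi> k. Im (u $ Some k))"
  define K where "K = (\<Sum>j\<in>UNIV. \<bar>a $ j\<bar> + \<bar>b $ j\<bar>)"
  define \<epsilon>' where "\<epsilon>' = \<epsilon> / (K + 1)"
  have K: "K \<ge> 0" unfolding K_def by (intro sum_nonneg) simp
  then have \<epsilon>': "\<epsilon>' > 0" "K * \<epsilon>' \<le> \<epsilon>" using e unfolding \<epsilon>'_def by (simp_all add: field_simps)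
  define D where "D x = frechet_derivative G (at x)" for x
  define S where "S N s v = (\<Sum>\<iota>\<in>grid N. D (grid_point P N s \<iota>) v)" for N s v
  have lin: "linear (D x)" for x
    unfolding D_def using diff frechet_derivative_works has_derivative_linear by blast
  have "\<forall>\<^sub>F N in sequentially. \<forall>j\<in>UNIV. \<forall>t\<in>UNIV. \<forall>s\<in>{0..1}.
     norm (S N s (lattice_dir P t j)) \<le> \<epsilon>' * real (card (grid N :: (('n \<Rightarrow> int) \<times> ('n \<Rightarrow> int)) set))"
    unfolding S_def D_def
    by (intro eventually_ball_finite ballI grid_sum_derivative_small[OF diff cont per \<epsilon>'(1)]) simp_all
  then show ?thesis
  proof (rule eventually_mono, intro ballI)
    fix N :: nat and s :: real assume est: "\<forall>j\<in>UNIV. \<forall>t\<in>UNIV. \<forall>s\<in>{0..1}.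
      norm (S N s (lattice_dir P t j)) \<le> \<epsilon>' * real (card (grid N :: (('n \<Rightarrow> int) \<times> ('n \<Rightarrow> int)) set))"
      and s: "s \<in> {0..1}"
    define cd where "cd = real (card (grid N :: (('n \<Rightarrow> int) \<times> ('n \<Rightarrow> int)) set))"
    have "S N s u = (\<Sum>j\<in>UNIV. complex_of_real (a $ j) * S N s (lattice_dir P False j)
                               + complex_of_real (b $ j) * S N s (lattice_dir P True j))"
    proof -
      have "D x u = (\<Sum>j\<in>UNIV. complex_of_real (a $ j) * D x (lattice_dir P False j)
                               + complex_of_real (b $ j) * D x (lattice_dir P True j))" for x
        by (subst z_direction_decomposition[OF invP u])
           (simp only: a_def b_def linear_sum[OF lin] linear_add[OF lin] linear_cmul[OF lin] o_def,
            simp add: scaleR_conv_of_real)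
      then show ?thesis
        unfolding S_def by (simp add: sum.swap[of _ "grid N"] sum_distrib_left sum.distrib)
    qed
    also have "norm \<dots> \<le> (\<Sum>j\<in>UNIV. \<bar>a $ j\<bar> * (\<epsilon>' * cd) + \<bar>b $ j\<bar> * (\<epsilon>' * cd))"
      using est s unfolding cd_def
      by (intro order_trans[OF norm_sum] sum_mono order_trans[OF norm_triangle_ineq] add_mono)
         (auto simp: norm_mult intro!: mult_left_mono)
    also have "\<dots> = K * \<epsilon>' * cd" unfolding K_def sum_distrib_right by (simp add: algebra_simps)
    also have "\<dots> \<le> \<epsilon> * cd" using \<epsilon>'(2) unfolding cd_def by (intro mult_right_mono) simp_all
    finally show "norm (\<Sum>\<iota>\<in>grid N. frechet_derivative G (at (grid_point P N s \<iota>)) u) \<le> \<epsilon> * cd"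
      unfolding S_def D_def .
  qed
qed

lemma grid_sum_derivative_small_combination:
  fixes P :: "real^'n::finite^'n" and F :: "'i \<Rightarrow> complex^('n option) \<Rightarrow> complex"
  assumes invP: "invertible P" and finI: "finite I"
    and dF: "\<And>i x. i \<in> I \<Longrightarrow> F i differentiable (at x)"
    and cF: "\<And>i v. i \<in> I \<Longrightarrow> continuous_on UNIV (\<lambda>x. frechet_derivative (F i) (at x) v)"
    and per: "\<And>i. i \<in> I \<Longrightarrow> lattice_periodic P (F i)"
    and u: "\<And>i. i \<in> I \<Longrightarrow> u i $ None = 0" and e: "\<epsilon> > 0"
  shows "\<forall>\<^sub>F N in sequentially. \<forall>s\<in>{0..1}.
           norm (\<Sum>\<iota>\<in>grid N. \<Sum>i\<in>I. c i * frechet_derivative (F i) (at (grid_point P N s \<iota>)) (u i))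
             \<le> \<epsilon> * real (card (grid N :: (('n \<Rightarrow> int) \<times> ('n \<Rightarrow> int)) set))"
proof -
  define C where "C = (\<Sum>i\<in>I. norm (c i))"
  define \<epsilon>' where "\<epsilon>' = \<epsilon> / (C + 1)"
  have C: "C \<ge> 0" unfolding C_def by (intro sum_nonneg) simp
  then have \<epsilon>': "\<epsilon>' > 0" "C * \<epsilon>' \<le> \<epsilon>" using e unfolding \<epsilon>'_def by (simp_all add: field_simps)
  have "\<forall>\<^sub>F N in sequentially. \<forall>i\<in>I. \<forall>s\<in>{0..1}.
     norm (\<Sum>\<iota>\<in>grid N. frechet_derivative (F i) (at (grid_point P N s \<iota>)) (u i))
       \<le> \<epsilon>' * real (card (grid N :: (('n \<Rightarrow> int) \<times> ('n \<Rightarrow> int)) set))"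
    using finI by (intro eventually_ball_finite ballI grid_sum_derivative_small_z[OF invP dF cF per u \<epsilon>'(1)])
  then show ?thesis
  proof (rule eventually_mono, intro ballI)
    fix N :: nat and s :: real
    define cd where "cd = real (card (grid N :: (('n \<Rightarrow> int) \<times> ('n \<Rightarrow> int)) set))"
    assume "\<forall>i\<in>I. \<forall>s\<in>{0..1}. norm (\<Sum>\<iota>\<in>grid N. frechet_derivative (F i) (at (grid_point P N s \<iota>)) (u i))
       \<le> \<epsilon>' * real (card (grid N :: (('n \<Rightarrow> int) \<times> ('n \<Rightarrow> int)) set))" and s: "s \<in> {0..1}"
    then have est: "norm (\<Sum>\<iota>\<in>grid N. frechet_derivative (F i) (at (grid_point P N s \<iota>)) (u i)) \<le> \<epsilon>' * cd"
      if "i \<in> I" for i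
      using that unfolding cd_def by blast
    have "norm (\<Sum>\<iota>\<in>grid N. \<Sum>i\<in>I. c i * frechet_derivative (F i) (at (grid_point P N s \<iota>)) (u i))
        = norm (\<Sum>i\<in>I. c i * (\<Sum>\<iota>\<in>grid N. frechet_derivative (F i) (at (grid_point P N s \<iota>)) (u i)))"
      by (simp add: sum.swap[of _ "grid N"] sum_distrib_left)
    also have "\<dots> \<le> (\<Sum>i\<in>I. norm (c i) * (\<epsilon>' * cd))"
      using est by (intro order_trans[OF norm_sum] sum_mono) (simp add: norm_mult mult_left_mono)
    also have "\<dots> = C * \<epsilon>' * cd" unfolding C_def by (simp add: sum_distrib_right mult.assoc)
    also have "\<dots> \<le> \<epsilon> * cd" using \<epsilon>'(2) unfolding cd_def by (intro mult_right_mono) simp_all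
    finally show "norm (\<Sum>\<iota>\<in>grid N. \<Sum>i\<in>I. c i * frechet_derivative (F i) (at (grid_point P N s \<iota>)) (u i))
        \<le> \<epsilon> * cd" .
  qed
qed

lemma grid_sum_w_increment:
  fixes h :: "complex^('n::finite option) \<Rightarrow> complex"
  assumes dh: "\<And>x. h differentiable (at x)"
    and bound: "\<And>s. s \<in> {0..1} \<Longrightarrow> norm (\<Sum>\<iota>\<in>grid N. frechet_derivative h (at (grid_point P N s \<iota>)) (axis None 1)) \<le> B"
  shows "norm ((\<Sum>\<iota>\<in>grid N. h (grid_point P N 1 \<iota>)) - (\<Sum>\<iota>\<in>grid N. h (grid_point P N 0 \<iota>))) \<le> B"
proof -
  define Q where "Q s = (\<Sum>\<iota>\<in>grid N. h (grid_point P N s \<iota>))" for s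
  define Q' where "Q' s = (\<Sum>\<iota>\<in>grid N. frechet_derivative h (at (grid_point P N s \<iota>)) (axis None 1))" for s
  have shift: "grid_point P N 0 \<iota> + s *\<^sub>R axis None 1 = grid_point P N s \<iota>" for s \<iota>
    unfolding grid_point_def by (simp only: scaleR_zero_left add_0_left add.commute)
  have deriv: "(Q has_derivative (\<lambda>t. t *\<^sub>R Q' s)) (at s)" for s
  proof -
    have "((\<lambda>s. \<Sum>\<iota>\<in>grid N. h (grid_point P N 0 \<iota> + s *\<^sub>R axis None 1)) has_vector_derivative
        (\<Sum>\<iota>\<in>grid N. frechet_derivative h (at (grid_point P N 0 \<iota> + s *\<^sub>R axis None 1)) (axis None 1))) (at s within UNIV)"
      by (intro has_vector_derivative_sum has_vector_derivative_along_line dh)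
    then show ?thesis unfolding shift Q_def[symmetric] Q'_def[symmetric] has_vector_derivative_def by simp
  qed
  then have "continuous_on {0..1} Q"
    by (intro continuous_at_imp_continuous_on ballI has_derivative_continuous)
  then obtain s where s: "s \<in> {0<..<1}" and "norm (Q 1 - Q 0) \<le> norm ((\<lambda>t. t *\<^sub>R Q' s) (1 - 0))"
    using mvt_general[OF zero_less_one _ deriv] by blast
  then have "norm (Q 1 - Q 0) \<le> norm (Q' s)" by simp
  also have "\<dots> \<le> B" unfolding Q'_def using s by (intro bound) simp
  finally show ?thesis unfolding Q_def .
qed

subsection \<open>The averaging argument\<close>

theorem twist_factor_eq_1:
  fixes P :: "real^'n^'n" and M :: "int^'n::finite^'n" and lam :: "'n \<Rightarrow> real"
    and h :: "complex^('n option) \<Rightarrow> complex" and F :: "'i \<Rightarrow> complex^('n option) \<Rightarrow> complex"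
  assumes invP: "invertible P" and detM: "det M = 1"
    and eig: "\<And>a i. (P *v (map_matrix real_of_int M *v a)) $ i = exp (lam i) * (P *v a) $ i"
    and dh: "\<And>x. h differentiable (at x)" and per_h: "lattice_periodic P h"
    and r: "r \<noteq> 0" and ray: "\<And>x. \<exists>t>0. h x = complex_of_real t * r"
    and twist: "\<And>x. h (nak_ltrans lam (1, 0) x) = complex_of_real \<kappa> * h x"
    and finI: "finite I"
    and dF: "\<And>i x. i \<in> I \<Longrightarrow> F i differentiable (at x)"
    and cF: "\<And>i v. i \<in> I \<Longrightarrow> continuous_on UNIV (\<lambda>x. frechet_derivative (F i) (at x) v)"
    and per_F: "\<And>i. i \<in> I \<Longrightarrow> lattice_periodic P (F i)"
    and u: "\<And>i. i \<in> I \<Longrightarrow> u i $ None = 0"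
    and dw: "\<And>x. frechet_derivative h (at x) (axis None 1) = (\<Sum>i\<in>I. c i * frechet_derivative (F i) (at x) (u i))"
  shows "\<kappa> = 1"
proof -
  have cont_h: "continuous_on UNIV h"
    using dh by (intro continuous_at_imp_continuous_on ballI differentiable_imp_continuous_within)
  obtain m where m: "m > 0" and lower: "\<And>N. N > 0 \<Longrightarrow>
      norm r * m * real (card (grid N :: (('n \<Rightarrow> int) \<times> ('n \<Rightarrow> int)) set)) \<le> norm (\<Sum>\<iota>\<in>grid N. h (grid_point P N 0 \<iota>))"
    using grid_sum_lower_bound[OF cont_h r ray, of P] by blast
  have "\<bar>\<kappa> - 1\<bar> * (norm r * m) \<le> 0 + \<epsilon>" if e: "\<epsilon> > 0" for \<epsilon>
  proof -
    have "\<exists>N. N > 0 \<and> (\<forall>s\<in>{0..1}.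
        norm (\<Sum>\<iota>\<in>grid N. \<Sum>i\<in>I. c i * frechet_derivative (F i) (at (grid_point P N s \<iota>)) (u i))
          \<le> \<epsilon> * real (card (grid N :: (('n \<Rightarrow> int) \<times> ('n \<Rightarrow> int)) set)))"
      by (intro eventually_happens'[OF sequentially_bot] eventually_conj eventually_gt_at_top
          grid_sum_derivative_small_combination[OF invP finI dF cF per_F u e])
    then obtain N where N: "N > 0" and small: "\<And>s. s \<in> {0..1} \<Longrightarrow>
        norm (\<Sum>\<iota>\<in>grid N. frechet_derivative h (at (grid_point P N s \<iota>)) (axis None 1))
          \<le> \<epsilon> * real (card (grid N :: (('n \<Rightarrow> int) \<times> ('n \<Rightarrow> int)) set))"
      unfolding dw by blast
    define cd where "cd = real (card (grid N :: (('n \<Rightarrow> int) \<times> ('n \<Rightarrow> int)) set))"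
    have cd: "cd > 0" unfolding cd_def using zero_in_grid[OF N] by (auto simp: card_gt_0_iff finite_grid)
    have "(\<Sum>\<iota>\<in>grid N. h (grid_point P N 1 \<iota>)) = complex_of_real \<kappa> * (\<Sum>\<iota>\<in>grid N. h (grid_point P N 0 \<iota>))"
      by (simp add: sum_grid_twist[OF per_h N detM eig, symmetric] twist sum_distrib_left)
    then have increment: "(\<Sum>\<iota>\<in>grid N. h (grid_point P N 1 \<iota>)) - (\<Sum>\<iota>\<in>grid N. h (grid_point P N 0 \<iota>))
        = complex_of_real (\<kappa> - 1) * (\<Sum>\<iota>\<in>grid N. h (grid_point P N 0 \<iota>))"
      by (simp add: algebra_simps)
    have "\<bar>\<kappa> - 1\<bar> * norm (\<Sum>\<iota>\<in>grid N. h (grid_point P N 0 \<iota>)) \<le> \<epsilon> * cd"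
      using grid_sum_w_increment[OF dh small] unfolding cd_def increment norm_mult norm_of_real .
    moreover have "\<bar>\<kappa> - 1\<bar> * (norm r * m * cd) \<le> \<bar>\<kappa> - 1\<bar> * norm (\<Sum>\<iota>\<in>grid N. h (grid_point P N 0 \<iota>))"
      using lower[OF N] unfolding cd_def by (intro mult_left_mono) simp_all
    ultimately have "(\<bar>\<kappa> - 1\<bar> * (norm r * m)) * cd \<le> \<epsilon> * cd" by (simp add: mult_ac)
    then show ?thesis using cd by simp
  qed
  then have "\<bar>\<kappa> - 1\<bar> * (norm r * m) \<le> 0" by (rule field_le_epsilon)
  then show ?thesis using m r by (simp add: mult_le_0_iff)
qed

section \<open>Nakamura manifolds\<close>

lemma smooth_map_differentiable: "smooth_map f \<Longrightarrow> f differentiable (at x)"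
  by (erule smooth_map.cases) auto

lemma smooth_map_frechet_derivative: "smooth_map f \<Longrightarrow> smooth_map (\<lambda>x. frechet_derivative f (at x) v)"
  by (erule smooth_map.cases) auto

lemma smooth_map_continuous_derivative: "smooth_map f \<Longrightarrow> continuous_on UNIV (\<lambda>x. frechet_derivative f (at x) v)"
  using smooth_map_differentiable[OF smooth_map_frechet_derivative[of f v]]
  by (intro continuous_at_imp_continuous_on ballI differentiable_imp_continuous_within) auto

lemma lattice_periodic_if_nak_invariant:
  assumes "\<forall>\<gamma>\<in>nak_lattice \<tau> P. \<forall>x v. \<Omega> (nak_ltrans lam \<gamma> x) (\<lambda>j. nak_dltrans lam \<gamma> (v j)) = \<Omega> x v"
  shows "lattice_periodic P (\<lambda>x. \<Omega> x v)"
  unfolding lattice_periodic_def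
proof (intro allI)
  fix x and a b :: "'a \<Rightarrow> int"
  define \<gamma> where "\<gamma> = (0 :: complex,
    \<chi> i. complex_of_real ((P *v int_vec 1 a) $ i) + \<i> * complex_of_real ((P *v int_vec 1 b) $ i))"
  have "\<gamma> = (of_int 0 + \<i> * complex_of_real (\<tau> * of_int 0),
        (\<chi> i. complex_of_real ((P *v (\<chi> j. real_of_int ((\<chi> j. a j) $ j))) $ i)
              + \<i> * complex_of_real ((P *v (\<chi> j. real_of_int ((\<chi> j. b j) $ j))) $ i)))"
    unfolding \<gamma>_def int_vec_def by simp
  then have \<gamma>: "\<gamma> \<in> nak_lattice \<tau> P" unfolding nak_lattice_def by blast
  have "nak_ltrans lam \<gamma> x = x + zvec P (int_vec 1 a) (int_vec 1 b)"
    unfolding \<gamma>_def nak_ltrans_def zvec_def vec_eq_iff by (auto split: option.splits)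
  moreover have "(\<lambda>j. nak_dltrans lam \<gamma> (v j)) = v"
    unfolding \<gamma>_def nak_dltrans_def by (auto simp: fun_eq_iff vec_eq_iff split: option.splits)
  ultimately show "\<Omega> (x + zvec P (int_vec 1 a) (int_vec 1 b)) v = \<Omega> x v"
    using assms \<gamma> by (metis (no_types, lifting))
qed

lemma one_zero_in_nak_lattice: "(1, 0) \<in> nak_lattice \<tau> P"
proof -
  have "(1::complex, 0::complex^'a)
     = (of_int 1 + \<i> * complex_of_real (\<tau> * of_int 0),
        (\<chi> i. complex_of_real ((P *v (\<chi> j. real_of_int ((0::int^'a) $ j))) $ i)
              + \<i> * complex_of_real ((P *v (\<chi> j. real_of_int ((0::int^'a) $ j))) $ i)))"
    by (simp add: vec_eq_iff matrix_vector_mult_def)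
  then show ?thesis unfolding nak_lattice_def by blast
qed

lemma sum_lessThan_double_div2: "(\<Sum>j<2*p. f (j div 2)) = 2 * (\<Sum>t<p. f t)" for f :: "nat \<Rightarrow> real"
proof (induction p)
  case (Suc p)
  have "{..<2 * Suc p} = insert (2*p+1) (insert (2*p) {..<2*p})" by auto
  then show ?case using Suc by simp
qed simp

lemma pp_covector_nak_dltrans_coord_frame:
  assumes \<alpha>: "is_pp_covector p \<alpha>" and Ks: "distinct Ks" "length Ks = p"
  shows "\<alpha> (\<lambda>j. nak_dltrans lam (1, 0) (coord_frame (map Some Ks @ Rs) j))
       = exp (2 * (\<Sum>k\<in>set Ks. lam k)) * \<alpha> (coord_frame (map Some Ks @ Rs))"
proof -
  define r where "r j = exp (lam (Ks ! (j div 2)))" for j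
  have "nak_dltrans lam (1, 0) (coord_frame (map Some Ks @ Rs) j) = r j *\<^sub>R coord_frame (map Some Ks @ Rs) j"
    if "j < 2*p" for j
  proof -
    have "j div 2 < length Ks" using that Ks(2) by simp
    then have "coord_frame (map Some Ks @ Rs) j = axis (Some (Ks ! (j div 2))) (if even j then 1 else \<i>)"
      by (simp add: coord_frame_def nth_append)
    moreover have "c *\<^sub>R z = complex_of_real c * z" for c and z :: complex by (simp add: scaleR_conv_of_real)
    ultimately show ?thesis
      unfolding r_def nak_dltrans_def vec_eq_iff
      by (auto simp: vector_scaleR_component axis_def split: option.splits)
  qed
  then have "\<alpha> (\<lambda>j. nak_dltrans lam (1, 0) (coord_frame (map Some Ks @ Rs) j))
      = \<alpha> (\<lambda>j. r j *\<^sub>R coord_frame (map Some Ks @ Rs) j)"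
    by (intro form_arityD[OF form_arity_pp_covector[OF \<alpha>]])
  also have "\<dots> = of_real (\<Prod>j<2*p. r j) * \<alpha> (coord_frame (map Some Ks @ Rs))"
    by (rule multihomogeneousD[OF multihomogeneous_pp_covector[OF \<alpha>]])
  also have "(\<Prod>j<2*p. r j) = exp (\<Sum>j<2*p. lam (Ks ! (j div 2)))"
    unfolding r_def by (simp add: exp_sum)
  also have "(\<Sum>j<2*p. lam (Ks ! (j div 2))) = 2 * (\<Sum>t<p. lam (Ks ! t))"
    by (rule sum_lessThan_double_div2)
  also have "(\<Sum>t<p. lam (Ks ! t)) = (\<Sum>k\<in>set Ks. lam k)"
    using sum.reindex_bij_betw[OF bij_betw_nth[OF Ks(1) refl refl], where g=lam] Ks(2) by simp
  finally show ?thesis .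
qed

lemma nak_invariant_coord_frame_twist:
  assumes invariant: "\<forall>\<gamma>\<in>nak_lattice \<tau> P. \<forall>x v. \<Omega> (nak_ltrans lam \<gamma> x) (\<lambda>j. nak_dltrans lam \<gamma> (v j)) = \<Omega> x v"
    and pp: "\<And>x. is_pp_covector p (\<Omega> x)" and Ks: "distinct Ks" "length Ks = p"
  shows "\<Omega> (nak_ltrans lam (1, 0) x) (coord_frame (map Some Ks @ Rs))
       = complex_of_real (exp (- 2 * (\<Sum>k\<in>set Ks. lam k))) * \<Omega> x (coord_frame (map Some Ks @ Rs))"
proof -
  have "complex_of_real (exp (2 * (\<Sum>k\<in>set Ks. lam k))) * \<Omega> (nak_ltrans lam (1, 0) x) (coord_frame (map Some Ks @ Rs))
      = \<Omega> x (coord_frame (map Some Ks @ Rs))"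
    using invariant one_zero_in_nak_lattice pp_covector_nak_dltrans_coord_frame[OF pp Ks] by metis
  then show ?thesis by (simp add: field_simps exp_minus mult_exp_exp[symmetric])
qed

lemma obtain_coord_frame_prefix:
  fixes K :: "'n::finite set"
  obtains Ks Rs where "distinct Ks" "set Ks = K" "distinct (map Some Ks @ Rs)" "set (map Some Ks @ Rs) = UNIV"
proof -
  obtain Ks where Ks: "distinct Ks" "set Ks = K" using finite_distinct_list[of K] by auto
  obtain Rs where Rs: "distinct Rs" "set Rs = UNIV - Some ` K" using finite_distinct_list[of "UNIV - Some ` K"] by auto
  show thesis by (rule that[OF Ks]) (use Ks Rs in \<open>auto simp: distinct_map inj_on_def\<close>)
qed

lemma closed_form_first_derivative:
  assumes "ext_d k \<Omega> = (\<lambda>x v. 0)"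
  shows "frechet_derivative (\<lambda>y. \<Omega> y (\<lambda>j. V (Suc j))) (at x) (V 0)
       = (\<Sum>i\<in>{1..k}. - ((-1) ^ i) * frechet_derivative (\<lambda>y. \<Omega> y (\<lambda>j. if j < i then V j else V (Suc j))) (at x) (V i))"
proof -
  have "{..k} = insert 0 {1..k}" by auto
  moreover have "ext_d k \<Omega> x V = 0" using assms by simp
  ultimately have "frechet_derivative (\<lambda>y. \<Omega> y (\<lambda>j. V (Suc j))) (at x) (V 0)
      + (\<Sum>i\<in>{1..k}. (-1) ^ i * frechet_derivative (\<lambda>y. \<Omega> y (\<lambda>j. if j < i then V j else V (Suc j))) (at x) (V i)) = 0"
    unfolding ext_d_def by simp
  then show ?thesis by (simp add: sum_negf eq_neg_iff_add_eq_0 add.commute)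
qed

lemma eq_0_if_subset_sums_eq_0:
  fixes lam :: "'n::finite \<Rightarrow> real"
  assumes p: "1 \<le> p" "p < CARD('n)" and sums: "\<And>K. card K = p \<Longrightarrow> (\<Sum>k\<in>K. lam k) = 0"
  shows "lam i = 0"
proof -
  have const: "lam j = lam j'" for j j'
  proof (cases "j = j'")
    case False
    have "card (UNIV - {j, j'}) = CARD('n) - 2" using False by (simp add: card_Diff_subset)
    then have "p - 1 \<le> card (UNIV - {j, j'})" using p by simp
    then obtain S where S: "S \<subseteq> UNIV - {j, j'}" "card S = p - 1" "finite S"
      by (meson obtain_subset_with_card_n)
    have notin: "j \<notin> S" "j' \<notin> S" using S(1) by auto
    then have "card (insert j S) = p" "card (insert j' S) = p" using S(2,3) p(1) by simp_all
    then have "(\<Sum>k\<in>insert j S. lam k) = 0" "(\<Sum>k\<in>insert j' S. lam k) = 0" by (simp_all only: sums)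
    then show ?thesis using S(3) notin by simp
  qed simp
  have "p \<le> card (UNIV :: 'n set)" using p by simp
  then obtain K :: "'n set" where K: "card K = p" by (meson obtain_subset_with_card_n)
  have "(\<Sum>k\<in>K. lam k) = (\<Sum>k\<in>K. lam i)" by (rule sum.cong[OF refl const])
  then have "real p * lam i = 0" using sums[OF K] K by simp
  then show ?thesis using p(1) by simp
qed

theorem nakamura_p_kaehler_subset_sum_eq_0:
  fixes M :: "int^'n^'n" and P :: "real^'n^'n" and lam :: "'n::finite \<Rightarrow> real"
  assumes detM: "det M = 1" and invP: "invertible P"
    and diag: "P ** (\<chi> i j. real_of_int (M $ i $ j)) ** matrix_inv P = (\<chi> i j. if i = j then exp (lam i) else 0)"
    and \<Omega>: "nakamura_p_kaehler lam P \<tau> p \<Omega>" and K: "card K = p"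
  shows "(\<Sum>k\<in>K. lam k) = 0"
proof -
  have smooth: "\<And>v. smooth_map (\<lambda>x. \<Omega> x v)"
    and pp: "\<And>x. is_pp_covector p (\<Omega> x)" and transverse: "\<And>x. transverse p (\<Omega> x)"
    and closed: "ext_d (2*p) \<Omega> = (\<lambda>x v. 0)"
    and invariant: "\<forall>\<gamma>\<in>nak_lattice \<tau> P. \<forall>x v. \<Omega> (nak_ltrans lam \<gamma> x) (\<lambda>j. nak_dltrans lam \<gamma> (v j)) = \<Omega> x v"
    using \<Omega> unfolding nakamura_p_kaehler_def p_kaehler_form_def by auto
  obtain Ks Rs where Ks: "distinct Ks" "set Ks = K"
    and frame: "distinct (map Some Ks @ Rs)" "set (map Some Ks @ Rs) = UNIV"
    by (rule obtain_coord_frame_prefix)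
  define kl where "kl = map Some Ks @ Rs"
  have len_Ks: "length Ks = p" using distinct_card[OF Ks(1)] Ks(2) K by simp
  have "p < CARD('n option)" using K card_mono[of "UNIV :: 'n set" K] by simp
  then obtain r where r: "r \<noteq> 0"
    and ray: "\<And>\<Omega>. is_pp_covector p \<Omega> \<Longrightarrow> transverse p \<Omega> \<Longrightarrow> \<exists>t>0. \<Omega> (coord_frame kl) = complex_of_real t * r"
    using transverse_coord_frame_ray[OF frame[folded kl_def]] by metis
  define V where "V j = (case j of 0 \<Rightarrow> axis None 1 | Suc j' \<Rightarrow> coord_frame kl j')" for j
  have "exp (- 2 * (\<Sum>k\<in>K. lam k)) = 1"
  proof (rule twist_factor_eq_1[where h="\<lambda>x. \<Omega> x (coord_frame kl)" and I="{1..2*p}" and u=V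
        and F="\<lambda>i y. \<Omega> y (\<lambda>j. if j < i then V j else V (Suc j))" and c="\<lambda>i. - ((-1) ^ i)"])
    show "\<And>a i. (P *v (map_matrix real_of_int M *v a)) $ i = exp (lam i) * (P *v a) $ i"
      using diagonalized_mult_apply[OF invP diag[folded map_matrix_def]] .
    show "\<And>x. \<exists>t>0. \<Omega> x (coord_frame kl) = complex_of_real t * r" using ray pp transverse by blast
    show "\<And>x. \<Omega> (nak_ltrans lam (1, 0) x) (coord_frame kl) = complex_of_real (exp (- 2 * sum lam K)) * \<Omega> x (coord_frame kl)"
      unfolding kl_def Ks(2)[symmetric] by (rule nak_invariant_coord_frame_twist[OF invariant pp Ks(1) len_Ks])
    show "V i $ None = 0" if i: "i \<in> {1..2*p}" for i
    proof -
      obtain j where j: "i = Suc j" "j < 2 * p" using i by (cases i) auto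
      then have "j div 2 < length Ks" using len_Ks by simp
      with j show ?thesis by (simp add: V_def kl_def coord_frame_def nth_append axis_def)
    qed
    have "(\<lambda>j. V (Suc j)) = coord_frame kl" "V 0 = axis None 1" by (simp_all add: V_def fun_eq_iff)
    then show "\<And>x. frechet_derivative (\<lambda>x. \<Omega> x (coord_frame kl)) (at x) (axis None 1)
        = (\<Sum>i\<in>{1..2*p}. - ((-1) ^ i) * frechet_derivative (\<lambda>y. \<Omega> y (\<lambda>j. if j < i then V j else V (Suc j))) (at x) (V i))"
      using closed_form_first_derivative[OF closed, of V] by metis
    show "\<And>x. (\<lambda>x. \<Omega> x (coord_frame kl)) differentiable (at x)"
      "\<And>i x. (\<lambda>y. \<Omega> y (\<lambda>j. if j < i then V j else V (Suc j))) differentiable (at x)"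
      by (rule smooth_map_differentiable[OF smooth])+
    show "\<And>i v. continuous_on UNIV (\<lambda>x. frechet_derivative (\<lambda>y. \<Omega> y (\<lambda>j. if j < i then V j else V (Suc j))) (at x) v)"
      by (rule smooth_map_continuous_derivative[OF smooth])
  qed (use detM invP r lattice_periodic_if_nak_invariant[OF invariant] in auto)
  then show ?thesis by simp
qed

theorem mainTheorem5:
  fixes M :: "int^'n^'n" and P :: "real^'n^'n" and lam :: "'n::finite \<Rightarrow> real"
    and \<tau> :: real and p :: nat
  assumes "CARD('n) \<ge> 2"
    and "det M = 1"
    and "invertible P"
    and "P ** (\<chi> i j. real_of_int (M $ i $ j)) ** matrix_inv P
           = (\<chi> i j. if i = j then exp (lam i) else 0)"
    and "\<forall>i. lam i \<noteq> 0"
    and "\<tau> \<noteq> 0"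
    and "1 \<le> p" and "p \<le> CARD('n) - 1"
  shows "\<not> (\<exists>\<Omega>. nakamura_p_kaehler lam P \<tau> p \<Omega>)"
proof
  assume "\<exists>\<Omega>. nakamura_p_kaehler lam P \<tau> p \<Omega>"
  then obtain \<Omega> where \<Omega>: "nakamura_p_kaehler lam P \<tau> p \<Omega>" ..
  have "p < CARD('n)" using assms(1,8) by simp
  then have "lam i = 0" for i
    using eq_0_if_subset_sums_eq_0[OF assms(7)] nakamura_p_kaehler_subset_sum_eq_0[OF assms(2-4) \<Omega>] by blast
  then show False using assms(5) by simp
qed

end
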